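(* Let $(X_n)_{n\geq -1}$ be a second-order Galton--Watson process with immigration with generic offspring variables $\xi,\eta$ and generic immigration variable $\varepsilon$, such that $\varepsilon$ is regularly varying with index $\gamma\in[0,\infty)$, and there exists $r\in(\max(1,\gamma),\infty)$ with $\mathbb{E}(\xi^r)<\infty$, $\mathbb{E}(\eta^r)<\infty$, $\mathbb{E}(X_0^r)<\infty$ and $\mathbb{E}(X_{-1}^r)<\infty$. Suppose that $\mathbb{P}(\xi=0)<1$ or $\mathbb{P}(\eta=0)<1$. Then for each $n\in\mathbb{N}$, \[ \mathbb{P}(X_n>x) \sim \sum_{i=1}^n m_{n-i}^\gamma\, \mathbb{P}(\varepsilon>x) \qquad \text{as } x\to\infty, \] and hence $X_n$ is regularly varying with index $\gamma$.
   Context: A second-order Galton--Watson process with immigration $(X_n)_{n\geq -1}$ is defined by $X_n = \sum_{i=1}^{X_{n-1}} \xi_{n,i} + \sum_{j=1}^{X_{n-2}} \eta_{n,j} + \varepsilon_n$ for $n\in\mathbb{N}=\{1,2,\dots\}$, where $X_{-1}, X_0$ (initial values) and all $\xi_{n,i},\eta_{n,j},\varepsilon_n$ ($n,i,j\in\mathbb{N}$) are independent non-negative integer-valued random variables, the $\xi_{n,i}$ are identically distributed with generic copy $\xi$, the $\eta_{n,j}$ identically distributed with generic copy $\eta$, and the $\varepsilon_n$ identically distributed with generic copy $\varepsilon$. Write $m_\xi=\mathbb{E}(\xi)$, $m_\eta=\mathbb{E}(\eta)$. Set $m_0:=1$ and for $k\in\mathbb{N}$, $m_k := \frac{\lambda_+^{k+1}-\lambda_-^{k+1}}{\lambda_+-\lambda_-}$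 with $\lambda_\pm := \frac{m_\xi \pm \sqrt{m_\xi^2+4m_\eta}}{2}$. A non-negative random variable $X$ is regularly varying with index $\alpha\geq 0$ if $\lim_{x\to\infty}\mathbb{P}(X>qx)/\mathbb{P}(X>x) = q^{-\alpha}$ for all $q>0$. $f\sim g$ means $f(x)/g(x)\to 1$ as $x\to\infty$. *)

theory Defs
  imports "HOL-Probability.Probability" "HOL-Library.Landau_Symbols"
begin

text \<open>Index type for the family of all primitive random variables of a
second-order Galton--Watson process with immigration:
initial values X_{-1}, X_0, offspring xi_{n,i}, eta_{n,j}, immigration eps_n.\<close>

datatype gwi_idx = IXm1 | IX0 | IXi nat nat | IEta nat nat | IEps nat

fun gwi_family ::
  "(int \<Rightarrow> 'a \<Rightarrow> nat) \<Rightarrow> (nat \<Rightarrow> nat \<Rightarrow> 'a \<Rightarrow> nat) \<Rightarrow> (nat \<Rightarrow> nat \<Rightarrow> 'a \<Rightarrow> nat)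
    \<Rightarrow> (nat \<Rightarrow> 'a \<Rightarrow> nat) \<Rightarrow> gwi_idx \<Rightarrow> 'a \<Rightarrow> nat" where
  "gwi_family X xi eta eps IXm1 = X (-1)"
| "gwi_family X xi eta eps IX0 = X 0"
| "gwi_family X xi eta eps (IXi n i) = xi n i"
| "gwi_family X xi eta eps (IEta n j) = eta n j"
| "gwi_family X xi eta eps (IEps n) = eps n"

definition gwi_index_set :: "gwi_idx set" where
  "gwi_index_set = {IXm1, IX0} \<union> {IXi n i | n i. 1 \<le> n \<and> 1 \<le> i}
     \<union> {IEta n j | n j. 1 \<le> n \<and> 1 \<le> j} \<union> {IEps n | n. 1 \<le> n}"

text \<open>Second-order Galton--Watson process with immigration on the probability space M.
Generic copies: xi 1 1, eta 1 1, eps 1.\<close>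
definition (in prob_space) second_order_GWI ::
  "(int \<Rightarrow> 'a \<Rightarrow> nat) \<Rightarrow> (nat \<Rightarrow> nat \<Rightarrow> 'a \<Rightarrow> nat) \<Rightarrow> (nat \<Rightarrow> nat \<Rightarrow> 'a \<Rightarrow> nat)
    \<Rightarrow> (nat \<Rightarrow> 'a \<Rightarrow> nat) \<Rightarrow> bool" where
  "second_order_GWI X xi eta eps \<longleftrightarrow>
     indep_vars (\<lambda>_. count_space UNIV) (gwi_family X xi eta eps) gwi_index_set \<and>
     (\<forall>n i. 1 \<le> n \<and> 1 \<le> i \<longrightarrow>
        distr M (count_space UNIV) (xi n i) = distr M (count_space UNIV) (xi 1 1)) \<and>
     (\<forall>n j. 1 \<le> n \<and> 1 \<le> j \<longrightarrow>
        distr M (count_space UNIV) (eta n j) = distr M (count_space UNIV) (eta 1 1)) \<and>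
     (\<forall>n. 1 \<le> n \<longrightarrow>
        distr M (count_space UNIV) (eps n) = distr M (count_space UNIV) (eps 1)) \<and>
     (\<forall>n::nat. 1 \<le> n \<longrightarrow> (\<forall>\<omega>\<in>space M.
        X (int n) \<omega> = (\<Sum>i\<in>{1..X (int n - 1) \<omega>}. xi n i \<omega>)
                     + (\<Sum>j\<in>{1..X (int n - 2) \<omega>}. eta n j \<omega>) + eps n \<omega>))"

definition (in prob_space) regularly_varying :: "('a \<Rightarrow> real) \<Rightarrow> real \<Rightarrow> bool" where
  "regularly_varying Y \<alpha> \<longleftrightarrow> \<alpha> \<ge> 0 \<and>
     (\<forall>q>0. ((\<lambda>x. prob {\<omega>\<in>space M. Y \<omega> > q * x} / prob {\<omega>\<in>space M. Y \<omega> > x})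
              \<longlongrightarrow> q powr (-\<alpha>)) at_top)"

definition lam_plus :: "real \<Rightarrow> real \<Rightarrow> real" where
  "lam_plus m\<xi> m\<eta> = (m\<xi> + sqrt (m\<xi>\<^sup>2 + 4 * m\<eta>)) / 2"

definition lam_minus :: "real \<Rightarrow> real \<Rightarrow> real" where
  "lam_minus m\<xi> m\<eta> = (m\<xi> - sqrt (m\<xi>\<^sup>2 + 4 * m\<eta>)) / 2"

definition mseq :: "real \<Rightarrow> real \<Rightarrow> nat \<Rightarrow> real" where
  "mseq m\<xi> m\<eta> k = (if k = 0 then 1 else
     (lam_plus m\<xi> m\<eta> ^ (k+1) - lam_minus m\<xi> m\<eta> ^ (k+1))
       / (lam_plus m\<xi> m\<eta> - lam_minus m\<xi> m\<eta>))"

end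

(* Write Fb x = P(eps > x). By induction on n, for all a, b >= 0 the ratio
   P(a X_n + b X_(n-1) > x) / Fb x tends to sum_(i=1..n) (a m_(n-i) + b m_(n-i-1))^gamma, with m_(-1) = 0.
   For n = 0 the limit is 0, since a X_0 + b X_(-1) has a finite r-th moment and r > gamma.
   In the induction step, a X_(n+1) + b X_n = a (S_xi + S_eta) + b X_n + a eps_(n+1), where S_xi sums
   X_n copies of xi and S_eta sums X_(n-1) copies of eta. A Fuk-Nagaev type bound (truncation plus
   Chernoff) for sums of i.i.d. variables with finite r-th moment shows that S_xi and S_eta differ from
   m_xi X_n and m_eta X_(n-1) by relative errors whose probabilities are o(Fb x); hence the first part
   has the tail ratio of (a m_xi + b) X_n + a m_eta X_(n-1), known by induction. The summand
   a eps_(n+1) is independent of it, and tail ratios of independent nonnegative summands add, which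
   contributes a^gamma. *)

theory Submission
  imports Defs "HOL-Real_Asymp.Real_Asymp"
begin

section \<open>Regularly varying tails\<close>

lemma tendsto_by_approximants:
  fixes f :: "real \<Rightarrow> real" and l u :: "real \<Rightarrow> real \<Rightarrow> real" and L U :: "real \<Rightarrow> real"
  assumes lower: "\<And>d. 0 < d \<Longrightarrow> d < 1/2 \<Longrightarrow> eventually (\<lambda>x. l d x \<le> f x) at_top"
    and upper: "\<And>d. 0 < d \<Longrightarrow> d < 1/2 \<Longrightarrow> eventually (\<lambda>x. f x \<le> u d x) at_top"
    and l: "\<And>d. 0 < d \<Longrightarrow> d < 1/2 \<Longrightarrow> (l d \<longlongrightarrow> L d) at_top"
    and u: "\<And>d. 0 < d \<Longrightarrow> d < 1/2 \<Longrightarrow> (u d \<longlongrightarrow> U d) at_top"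
    and L: "(L \<longlongrightarrow> c) (at_right 0)" and U: "(U \<longlongrightarrow> c) (at_right 0)"
  shows "(f \<longlongrightarrow> c) at_top"
proof (rule tendstoI)
  fix e :: real assume e: "e > 0"
  have "eventually (\<lambda>d. c - e/2 < L d) (at_right 0)" "eventually (\<lambda>d. U d < c + e/2) (at_right 0)"
    using order_tendstoD[OF L, of "c - e/2"] order_tendstoD[OF U, of "c + e/2"] e by auto
  moreover have "eventually (\<lambda>d. d \<in> {0<..<1/2}) (at_right (0::real))"
    by (rule eventually_at_right_real) simp
  ultimately have "eventually (\<lambda>d. c - e/2 < L d \<and> U d < c + e/2 \<and> d \<in> {0<..<1/2}) (at_right 0)"
    by eventually_elim auto
  then obtain d where d: "c - e/2 < L d" "U d < c + e/2" "0 < d" "d < 1/2"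
    using eventually_happens'[OF trivial_limit_at_right_real] by auto
  have "eventually (\<lambda>x. c - e < l d x) at_top"
    using d(1) e by (intro order_tendstoD(1)[OF l[OF d(3,4)]]) linarith
  moreover have "eventually (\<lambda>x. u d x < c + e) at_top"
    using d(2) e by (intro order_tendstoD(2)[OF u[OF d(3,4)]]) linarith
  ultimately show "eventually (\<lambda>x. dist (f x) c < e) at_top"
    using lower[OF d(3,4)] upper[OF d(3,4)] by eventually_elim (auto simp: dist_real_def abs_if)
qed

lemma power_powr_commute:
  fixes x :: real
  assumes "x > 0"
  shows "(x ^ n) powr s = (x powr s) ^ n"
  using assms by (simp add: powr_power powr_realpow[symmetric] powr_powr mult.commute)

lemma dyadic_bracket:
  fixes x x0 :: real
  assumes "0 < x0" "x0 \<le> x"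
  obtains k :: nat where "2^k * x0 \<le> x" "x < 2^Suc k * x0"
proof -
  define k where "k = nat \<lfloor>log 2 (x/x0)\<rfloor>"
  have q: "x/x0 \<ge> 1" using assms by simp
  then have "\<lfloor>log 2 (x/x0)\<rfloor> = int k" unfolding k_def by simp
  then have "2 powr real k \<le> x/x0" "x/x0 < 2 powr (real k + 1)"
    using floor_log_eq_powr_iff[of "x/x0" 2 "int k"] q by auto
  then have "2^k \<le> x/x0" "x/x0 < 2^Suc k"
    by (simp_all add: powr_realpow[symmetric] powr_add)
  with that assms show thesis by (simp add: field_simps)
qed

locale regvar_tail =
  fixes Fb :: "real \<Rightarrow> real" and \<gamma> :: real
  assumes Fb_pos: "\<And>x. Fb x > 0"
    and Fb_antimono: "\<And>x y. x \<le> y \<Longrightarrow> Fb y \<le> Fb x"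
    and Fb_regvar: "\<And>q. q > 0 \<Longrightarrow> ((\<lambda>x. Fb (q*x) / Fb x) \<longlongrightarrow> q powr (-\<gamma>)) at_top"
    and Fb_tendsto_0: "(Fb \<longlongrightarrow> 0) at_top"
    and index_nonneg: "\<gamma> \<ge> 0"
begin

lemma Fb_nonzero [simp]: "Fb x \<noteq> 0"
  using Fb_pos[of x] by simp

lemma divide_Fb_mono: "a \<le> b \<Longrightarrow> a / Fb x \<le> b / Fb x"
  using Fb_pos[of x] by (simp add: divide_right_mono)

lemma Fb_doubling_lower:
  assumes "\<rho> < 2 powr (-\<gamma>)"
  obtains x0 where "x0 > 0" "\<forall>x\<ge>x0. \<rho> * Fb x \<le> Fb (2*x)"
proof -
  have "eventually (\<lambda>x. \<rho> < Fb (2*x) / Fb x) at_top"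
    using Fb_regvar[of 2] assms by (auto simp: order_tendsto_iff)
  then obtain x1 where "\<And>x. x \<ge> x1 \<Longrightarrow> \<rho> < Fb (2*x) / Fb x"
    by (auto simp: eventually_at_top_linorder)
  then have "\<forall>x\<ge>max x1 1. \<rho> * Fb x \<le> Fb (2*x)"
    using Fb_pos by (auto simp: field_simps less_imp_le)
  then show thesis using that[of "max x1 1"] by simp
qed

lemma Fb_doubling_upper:
  assumes "\<sigma> > 2 powr (-\<gamma>)"
  obtains x0 where "x0 > 0" "\<forall>x\<ge>x0. Fb (2*x) \<le> \<sigma> * Fb x"
proof -
  have "eventually (\<lambda>x. Fb (2*x) / Fb x < \<sigma>) at_top"
    using Fb_regvar[of 2] assms by (auto simp: order_tendsto_iff)
  then obtain x1 where "\<And>x. x \<ge> x1 \<Longrightarrow> Fb (2*x) / Fb x < \<sigma>"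
    by (auto simp: eventually_at_top_linorder)
  then have "\<forall>x\<ge>max x1 1. Fb (2*x) \<le> \<sigma> * Fb x"
    using Fb_pos by (auto simp: field_simps less_imp_le)
  then show thesis using that[of "max x1 1"] by simp
qed

lemma Fb_dyadic_lower:
  assumes "\<rho> \<ge> 0" "x0 > 0" "\<forall>x\<ge>x0. \<rho> * Fb x \<le> Fb (2*x)"
  shows "\<rho>^k * Fb x0 \<le> Fb (2^k * x0)"
proof (induction k)
  case (Suc k)
  have "\<rho>^Suc k * Fb x0 \<le> \<rho> * Fb (2^k * x0)"
    using Suc assms(1) by (simp add: mult.assoc mult_left_mono)
  also have "\<dots> \<le> Fb (2^Suc k * x0)"
    using assms(2,3) by (simp add: mult.assoc)
  finally show ?case .
qed simp

lemma Fb_dyadic_upper: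
  assumes "\<sigma> \<ge> 0" "x0 > 0" "\<forall>x\<ge>x0. Fb (2*x) \<le> \<sigma> * Fb x"
  shows "Fb (2^k * x0) \<le> \<sigma>^k * Fb x0"
proof (induction k)
  case (Suc k)
  have "Fb (2^Suc k * x0) \<le> \<sigma> * Fb (2^k * x0)"
    using assms(2,3) by (simp add: mult.assoc)
  also have "\<dots> \<le> \<sigma>^Suc k * Fb x0"
    using Suc assms(1) by (simp add: mult.assoc mult_left_mono)
  finally show ?case .
qed simp

lemma potter_lower:
  assumes "e > 0"
  obtains c x0 where "c > 0" "x0 > 0" "\<And>x. x \<ge> x0 \<Longrightarrow> c * x powr (-(\<gamma>+e)) \<le> Fb x"
proof -
  define \<rho> where "\<rho> = (2::real) powr (-(\<gamma>+e))"
  have "\<rho> < 2 powr (-\<gamma>)" unfolding \<rho>_def using assms by (intro powr_less_mono) auto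
  then obtain x0 where x0: "x0 > 0" "\<forall>x\<ge>x0. \<rho> * Fb x \<le> Fb (2*x)"
    by (rule Fb_doubling_lower)
  define c where "c = Fb x0 * (2 / x0) powr (-(\<gamma>+e))"
  have "c * x powr (-(\<gamma>+e)) \<le> Fb x" if x: "x \<ge> x0" for x
  proof -
    obtain k where k: "2^k * x0 \<le> x" "x < 2^Suc k * x0" using dyadic_bracket[OF x0(1) x] .
    have "c * x powr (-(\<gamma>+e)) = Fb x0 * (2 * x / x0) powr (-(\<gamma>+e))"
      unfolding c_def using x0(1) x by (simp add: powr_mult[symmetric])
    also have "\<dots> \<le> Fb x0 * (2^Suc k) powr (-(\<gamma>+e))"
      using k x0 assms index_nonneg Fb_pos[of x0]
      by (intro mult_left_mono powr_mono2') (auto simp: field_simps)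
    also have "\<dots> = \<rho>^Suc k * Fb x0"
      unfolding \<rho>_def by (simp only: power_powr_commute mult.commute)
    also have "\<dots> \<le> Fb (2^Suc k * x0)"
      using x0 by (intro Fb_dyadic_lower) (auto simp: \<rho>_def)
    also have "\<dots> \<le> Fb x" using k by (intro Fb_antimono) simp
    finally show ?thesis .
  qed
  moreover have "c > 0" unfolding c_def using Fb_pos x0 by simp
  ultimately show thesis using that x0(1) by blast
qed

lemma potter_upper:
  assumes "0 \<le> q" "q < \<gamma>"
  obtains C x0 where "C > 0" "x0 > 0" "\<And>x. x \<ge> x0 \<Longrightarrow> Fb x \<le> C * x powr (-q)"
proof -
  define \<sigma> where "\<sigma> = (2::real) powr (-q)"
  have "\<sigma> > 2 powr (-\<gamma>)" unfolding \<sigma>_def using assms by (intro powr_less_mono) auto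
  then obtain x0 where x0: "x0 > 0" "\<forall>x\<ge>x0. Fb (2*x) \<le> \<sigma> * Fb x"
    by (rule Fb_doubling_upper)
  define C where "C = Fb x0 * (2 * x0) powr q"
  have "Fb x \<le> C * x powr (-q)" if x: "x \<ge> x0" for x
  proof -
    obtain k where k: "2^k * x0 \<le> x" "x < 2^Suc k * x0" using dyadic_bracket[OF x0(1) x] .
    have "Fb x \<le> Fb (2^k * x0)" using k by (intro Fb_antimono)
    also have "\<dots> \<le> \<sigma>^k * Fb x0"
      using x0 by (intro Fb_dyadic_upper) (auto simp: \<sigma>_def)
    also have "\<dots> = Fb x0 * (2^k) powr (-q)"
      unfolding \<sigma>_def by (simp add: power_powr_commute mult.commute)
    also have "\<dots> \<le> Fb x0 * (x / (2 * x0)) powr (-q)"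
      using k x0 assms Fb_pos[of x0]
      by (intro mult_left_mono powr_mono2') (auto simp: field_simps)
    also have "\<dots> = C * x powr (-q)"
      unfolding C_def using x0(1) x by (simp add: powr_divide powr_minus divide_simps)
    finally show ?thesis .
  qed
  moreover have "C > 0" unfolding C_def using Fb_pos x0 by simp
  ultimately show thesis using that x0(1) by blast
qed

lemma powr_div_Fb_tendsto_0:
  assumes "s > \<gamma>"
  shows "((\<lambda>x. x powr (-s) / Fb x) \<longlongrightarrow> 0) at_top"
proof -
  define e where "e = (s - \<gamma>)/2"
  have e: "e > 0" using assms by (simp add: e_def)
  obtain c x0 where c: "c > 0" "x0 > 0" "\<And>x. x \<ge> x0 \<Longrightarrow> c * x powr (-(\<gamma>+e)) \<le> Fb x"
    using potter_lower[OF e] by blast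
  show ?thesis
  proof (rule tendsto_sandwich)
    show "eventually (\<lambda>x. 0 \<le> x powr (-s) / Fb x) at_top"
      using Fb_pos by (auto intro!: always_eventually divide_nonneg_pos)
    show "eventually (\<lambda>x. x powr (-s) / Fb x \<le> x powr (-e) / c) at_top"
      using eventually_ge_at_top[of x0]
    proof eventually_elim
      case (elim x)
      have "x powr (-s) / Fb x \<le> x powr (-s) / (c * x powr (-(\<gamma>+e)))"
        using c elim Fb_pos[of x] by (intro divide_left_mono) auto
      also have "\<dots> = x powr (-e) / c"
        using elim c unfolding e_def by (simp add: powr_add[symmetric] divide_simps powr_minus)
      finally show ?case .
    qed
    show "((\<lambda>x. x powr (-e) / c) \<longlongrightarrow> 0) at_top"
      using e by (intro tendsto_divide_zero tendsto_neg_powr filterlim_ident) auto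
  qed simp
qed

end

section \<open>Tail ratios\<close>

lemma (in prob_space) prob_le_cover:
  assumes "A \<subseteq> B \<union> C" "B \<in> events" "C \<in> events"
  shows "prob A \<le> prob B + prob C"
  using assms finite_measure_mono[of A "B \<union> C"] measure_Un_le[of B M C] by auto

lemma (in prob_space) indep_var_prob_Int:
  assumes "indep_var N1 U N2 V" "A \<in> sets N1" "B \<in> sets N2"
  shows "prob ({\<omega>\<in>space M. U \<omega> \<in> A} \<inter> {\<omega>\<in>space M. V \<omega> \<in> B})
    = prob {\<omega>\<in>space M. U \<omega> \<in> A} * prob {\<omega>\<in>space M. V \<omega> \<in> B}"
proof -
  have "(\<lambda>\<omega>. (U \<omega>, V \<omega>)) -` (A \<times> B) \<inter> space M = {\<omega>\<in>space M. U \<omega> \<in> A} \<inter> {\<omega>\<in>space M. V \<omega> \<in> B}"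
    "U -` A \<inter> space M = {\<omega>\<in>space M. U \<omega> \<in> A}" "V -` B \<inter> space M = {\<omega>\<in>space M. V \<omega> \<in> B}"
    by auto
  with indep_varD[OF assms] show ?thesis by simp
qed

lemma (in prob_space) prob_sum_greater_ge:
  fixes W V :: "'a \<Rightarrow> real"
  assumes W: "W \<in> borel_measurable M" "\<And>\<omega>. \<omega> \<in> space M \<Longrightarrow> W \<omega> \<ge> 0"
    and V: "V \<in> borel_measurable M" "\<And>\<omega>. \<omega> \<in> space M \<Longrightarrow> V \<omega> \<ge> 0"
    and ind: "indep_var borel W borel V"
  shows "prob {\<omega>\<in>space M. W \<omega> > x} + prob {\<omega>\<in>space M. V \<omega> > x}
      - prob {\<omega>\<in>space M. W \<omega> > x} * prob {\<omega>\<in>space M. V \<omega> > x}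
    \<le> prob {\<omega>\<in>space M. W \<omega> + V \<omega> > x}"
proof -
  have "prob ({\<omega>\<in>space M. W \<omega> > x} \<union> {\<omega>\<in>space M. V \<omega> > x})
      = prob {\<omega>\<in>space M. W \<omega> > x} + prob {\<omega>\<in>space M. V \<omega> > x}
        - prob {\<omega>\<in>space M. W \<omega> > x} * prob {\<omega>\<in>space M. V \<omega> > x}"
    using W V indep_var_prob_Int[OF ind, of "{x<..}" "{x<..}"]
    by (subst measure_Un3) (auto simp: fmeasurable_eq_sets)
  moreover have "prob ({\<omega>\<in>space M. W \<omega> > x} \<union> {\<omega>\<in>space M. V \<omega> > x}) \<le> prob {\<omega>\<in>space M. W \<omega> + V \<omega> > x}"
  proof (rule finite_measure_mono)
    show "{\<omega>\<in>space M. W \<omega> + V \<omega> > x} \<in> events" using W V by measurable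
    show "{\<omega>\<in>space M. W \<omega> > x} \<union> {\<omega>\<in>space M. V \<omega> > x} \<subseteq> {\<omega>\<in>space M. W \<omega> + V \<omega> > x}"
    proof (rule subsetI)
      fix \<omega> assume "\<omega> \<in> {\<omega>\<in>space M. W \<omega> > x} \<union> {\<omega>\<in>space M. V \<omega> > x}"
      then show "\<omega> \<in> {\<omega>\<in>space M. W \<omega> + V \<omega> > x}" using W(2)[of \<omega>] V(2)[of \<omega>] by auto
    qed
  qed
  ultimately show ?thesis by simp
qed

lemma (in prob_space) prob_sum_greater_le:
  fixes W V :: "'a \<Rightarrow> real"
  assumes W: "W \<in> borel_measurable M" and V: "V \<in> borel_measurable M"
    and ind: "indep_var borel W borel V"
  shows "prob {\<omega>\<in>space M. W \<omega> + V \<omega> > x}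
    \<le> prob {\<omega>\<in>space M. W \<omega> > (1-d) * x} + prob {\<omega>\<in>space M. V \<omega> > (1-d) * x}
      + prob {\<omega>\<in>space M. W \<omega> > d * x} * prob {\<omega>\<in>space M. V \<omega> > d * x}"
proof -
  let ?C = "{\<omega>\<in>space M. W \<omega> > d * x} \<inter> {\<omega>\<in>space M. V \<omega> > d * x}"
  have meas: "{\<omega>\<in>space M. W \<omega> > s} \<in> events" "{\<omega>\<in>space M. V \<omega> > s} \<in> events" for s
    using W V by measurable
  have "{\<omega>\<in>space M. W \<omega> + V \<omega> > x}
      \<subseteq> {\<omega>\<in>space M. W \<omega> > (1-d) * x} \<union> ({\<omega>\<in>space M. V \<omega> > (1-d) * x} \<union> ?C)"
  proof
    fix \<omega> assume \<omega>: "\<omega> \<in> {\<omega>\<in>space M. W \<omega> + V \<omega> > x}"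
    have "\<not> (W \<omega> \<le> (1-d) * x \<and> V \<omega> \<le> (1-d) * x \<and> (W \<omega> \<le> d * x \<or> V \<omega> \<le> d * x))"
      using \<omega> by (auto simp: algebra_simps)
    then show "\<omega> \<in> {\<omega>\<in>space M. W \<omega> > (1-d) * x} \<union> ({\<omega>\<in>space M. V \<omega> > (1-d) * x} \<union> ?C)"
      using \<omega> by (auto simp: not_less)
  qed
  then have "prob {\<omega>\<in>space M. W \<omega> + V \<omega> > x}
      \<le> prob {\<omega>\<in>space M. W \<omega> > (1-d) * x} + prob ({\<omega>\<in>space M. V \<omega> > (1-d) * x} \<union> ?C)"
    using meas by (intro prob_le_cover) auto
  also have "\<dots> \<le> prob {\<omega>\<in>space M. W \<omega> > (1-d) * x} + (prob {\<omega>\<in>space M. V \<omega> > (1-d) * x} + prob ?C)"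
    using meas by (intro add_left_mono measure_Un_le) auto
  finally show ?thesis
    unfolding indep_var_prob_Int[OF ind, of "{d * x<..}" "{d * x<..}", simplified] by simp
qed

lemma (in prob_space) prob_greater_perturb:
  fixes U W :: "'a \<Rightarrow> real" and x :: real
  assumes U: "U \<in> borel_measurable M" and W: "W \<in> borel_measurable M" and d: "0 < d" "d < 1"
  defines "E \<equiv> {\<omega>\<in>space M. \<bar>W \<omega> - U \<omega>\<bar> > d * (U \<omega> + x)}"
  shows "prob {\<omega>\<in>space M. U \<omega> > (1+d)/(1-d) * x} \<le> prob {\<omega>\<in>space M. W \<omega> > x} + prob E"
    and "prob {\<omega>\<in>space M. W \<omega> > x} \<le> prob {\<omega>\<in>space M. U \<omega> > (1-d)/(1+d) * x} + prob E"
proof -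
  have meas: "E \<in> events" "{\<omega>\<in>space M. U \<omega> > s} \<in> events" "{\<omega>\<in>space M. W \<omega> > s} \<in> events" for s
    unfolding E_def using U W by measurable
  have "{\<omega>\<in>space M. U \<omega> > (1+d)/(1-d) * x} \<subseteq> {\<omega>\<in>space M. W \<omega> > x} \<union> E"
  proof
    fix \<omega> assume \<omega>: "\<omega> \<in> {\<omega>\<in>space M. U \<omega> > (1+d)/(1-d) * x}"
    then have "U \<omega> * (1-d) > (1+d) * x" using d by (simp add: field_simps)
    then show "\<omega> \<in> {\<omega>\<in>space M. W \<omega> > x} \<union> E"
      using \<omega> unfolding E_def by (cases "W \<omega> > x") (auto simp: algebra_simps abs_if)
  qed
  then show "prob {\<omega>\<in>space M. U \<omega> > (1+d)/(1-d) * x} \<le> prob {\<omega>\<in>space M. W \<omega> > x} + prob E"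
    using meas by (intro prob_le_cover)
  have "{\<omega>\<in>space M. W \<omega> > x} \<subseteq> {\<omega>\<in>space M. U \<omega> > (1-d)/(1+d) * x} \<union> E"
  proof
    fix \<omega> assume \<omega>: "\<omega> \<in> {\<omega>\<in>space M. W \<omega> > x}"
    show "\<omega> \<in> {\<omega>\<in>space M. U \<omega> > (1-d)/(1+d) * x} \<union> E"
    proof (cases "U \<omega> > (1-d)/(1+d) * x")
      case False
      then have "U \<omega> * (1+d) \<le> (1-d) * x" using d by (simp add: field_simps)
      then show ?thesis using \<omega> unfolding E_def by (auto simp: algebra_simps abs_if)
    qed (use \<omega> in auto)
  qed
  then show "prob {\<omega>\<in>space M. W \<omega> > x} \<le> prob {\<omega>\<in>space M. U \<omega> > (1-d)/(1+d) * x} + prob E"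
    using meas by (intro prob_le_cover)
qed

locale rv_tail_space = prob_space M + regvar_tail Fb \<gamma> for M :: "'a measure" and Fb \<gamma>
begin

definition tail_ratio :: "('a \<Rightarrow> real) \<Rightarrow> real \<Rightarrow> bool" where
  "tail_ratio U c \<longleftrightarrow> ((\<lambda>x. prob {\<omega>\<in>space M. U \<omega> > x} / Fb x) \<longlongrightarrow> c) at_top"

lemma tail_ratio_cong:
  assumes "\<And>\<omega>. \<omega> \<in> space M \<Longrightarrow> U \<omega> = V \<omega>"
  shows "tail_ratio U c \<longleftrightarrow> tail_ratio V c"
proof -
  have "{\<omega>\<in>space M. U \<omega> > x} = {\<omega>\<in>space M. V \<omega> > x}" for x using assms by auto
  then show ?thesis unfolding tail_ratio_def by simp
qed

lemma tail_ratio_scaled: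
  assumes "tail_ratio U c" "q > 0"
  shows "((\<lambda>x. prob {\<omega>\<in>space M. U \<omega> > q * x} / Fb x) \<longlongrightarrow> c * q powr (-\<gamma>)) at_top"
proof -
  have "filterlim (\<lambda>x. q * x) at_top at_top"
    using assms(2) by (intro filterlim_tendsto_pos_mult_at_top[OF tendsto_const]) (auto simp: filterlim_ident)
  from filterlim_compose[OF assms(1)[unfolded tail_ratio_def] this]
  have "((\<lambda>x. prob {\<omega>\<in>space M. U \<omega> > q * x} / Fb (q*x)) \<longlongrightarrow> c) at_top" by simp
  then have "((\<lambda>x. prob {\<omega>\<in>space M. U \<omega> > q * x} / Fb (q*x) * (Fb (q*x) / Fb x))
      \<longlongrightarrow> c * q powr (-\<gamma>)) at_top"
    by (intro tendsto_mult Fb_regvar assms)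
  then show ?thesis using Fb_pos by simp
qed

lemma tail_ratio_prob_tendsto_0:
  assumes "tail_ratio U c" "q > 0"
  shows "((\<lambda>x. prob {\<omega>\<in>space M. U \<omega> > q * x}) \<longlongrightarrow> 0) at_top"
proof -
  have "((\<lambda>x. prob {\<omega>\<in>space M. U \<omega> > q * x} / Fb x * Fb x) \<longlongrightarrow> c * q powr (-\<gamma>) * 0) at_top"
    by (intro tendsto_mult tail_ratio_scaled assms Fb_tendsto_0)
  then show ?thesis using Fb_pos by simp
qed

lemma tail_ratio_cmult:
  assumes "tail_ratio U c" "a > 0"
  shows "tail_ratio (\<lambda>\<omega>. a * U \<omega>) (c * a powr \<gamma>)"
proof -
  have "{\<omega>\<in>space M. U \<omega> > (1/a) * x} = {\<omega>\<in>space M. a * U \<omega> > x}" for x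
    using assms(2) by (auto simp: field_simps)
  moreover have "(1/a) powr (-\<gamma>) = a powr \<gamma>"
    using assms(2) by (simp add: powr_minus_divide powr_divide)
  ultimately show ?thesis
    using tail_ratio_scaled[OF assms(1), of "1/a"] assms(2) unfolding tail_ratio_def by simp
qed

lemma tail_ratio_eventually_le:
  assumes "tail_ratio U c"
  obtains x0 where "\<And>x. x \<ge> x0 \<Longrightarrow> prob {\<omega>\<in>space M. U \<omega> > x} \<le> (c + 1) * Fb x"
proof -
  have "eventually (\<lambda>x. prob {\<omega>\<in>space M. U \<omega> > x} / Fb x < c + 1) at_top"
    using order_tendstoD(2)[OF assms[unfolded tail_ratio_def], of "c + 1"] by simp
  then obtain x0 where "\<And>x. x \<ge> x0 \<Longrightarrow> prob {\<omega>\<in>space M. U \<omega> > x} / Fb x < c + 1"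
    by (auto simp: eventually_at_top_linorder)
  then have "prob {\<omega>\<in>space M. U \<omega> > x} \<le> (c + 1) * Fb x" if "x \<ge> x0" for x
    using that Fb_pos[of x] by (auto simp: divide_less_eq less_imp_le)
  with that show thesis by blast
qed

lemma tail_ratio_0_of_moment:
  assumes U: "U \<in> borel_measurable M" "\<And>\<omega>. \<omega> \<in> space M \<Longrightarrow> U \<omega> \<ge> 0"
    and int: "integrable M (\<lambda>\<omega>. U \<omega> powr r)" and r: "r > \<gamma>"
  shows "tail_ratio U 0"
  unfolding tail_ratio_def
proof (rule tendsto_sandwich[OF _ _ tendsto_const])
  define K where "K = expectation (\<lambda>\<omega>. U \<omega> powr r)"
  show "eventually (\<lambda>x. prob {\<omega>\<in>space M. U \<omega> > x} / Fb x \<le> K * (x powr (-r) / Fb x)) at_top"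
    using eventually_gt_at_top[of 0]
  proof eventually_elim
    case (elim x)
    have "prob {\<omega>\<in>space M. U \<omega> > x} \<le> prob {\<omega>\<in>space M. x powr r \<le> U \<omega> powr r}"
      using U elim r index_nonneg by (intro finite_measure_mono) (auto intro: powr_mono2)
    also have "\<dots> \<le> K / x powr r"
      unfolding K_def using elim U
      by (intro integral_Markov_inequality_measure[OF int, where A="space M"]) auto
    finally show ?case using Fb_pos[of x] elim
      by (simp add: divide_right_mono powr_minus divide_simps)
  qed
  have "((\<lambda>x. K * (x powr (-r) / Fb x)) \<longlongrightarrow> K * 0) at_top"
    by (intro tendsto_mult tendsto_const powr_div_Fb_tendsto_0 r)
  then show "((\<lambda>x. K * (x powr (-r) / Fb x)) \<longlongrightarrow> 0) at_top" by simp
qed (use Fb_pos in \<open>auto intro!: always_eventually divide_nonneg_pos\<close>)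

lemma tail_ratio_perturb:
  assumes U: "U \<in> borel_measurable M" and W: "W \<in> borel_measurable M"
    and TU: "tail_ratio U c"
    and close: "\<And>\<delta>. \<delta> > 0 \<Longrightarrow>
       ((\<lambda>x. prob {\<omega>\<in>space M. \<bar>W \<omega> - U \<omega>\<bar> > \<delta> * (U \<omega> + x)} / Fb x) \<longlongrightarrow> 0) at_top"
  shows "tail_ratio W c"
proof -
  define E where "E d x = prob {\<omega>\<in>space M. \<bar>W \<omega> - U \<omega>\<bar> > d * (U \<omega> + x)}" for d x
  define PU where "PU x = prob {\<omega>\<in>space M. U \<omega> > x}" for x
  show ?thesis unfolding tail_ratio_def
  proof (rule tendsto_by_approximants)
    fix d :: real assume d: "0 < d" "d < 1/2"
    show "((\<lambda>x. PU ((1+d)/(1-d) * x) / Fb x - E d x / Fb x) \<longlongrightarrow> c * ((1+d)/(1-d)) powr (-\<gamma>) - 0) at_top"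
      unfolding PU_def E_def using d by (intro tendsto_diff tail_ratio_scaled TU close) auto
    show "((\<lambda>x. PU ((1-d)/(1+d) * x) / Fb x + E d x / Fb x) \<longlongrightarrow> c * ((1-d)/(1+d)) powr (-\<gamma>) + 0) at_top"
      unfolding PU_def E_def using d by (intro tendsto_add tail_ratio_scaled TU close) auto
    have d1: "0 < d" "d < 1" using d by auto
    from divide_Fb_mono[OF prob_greater_perturb(1)[OF U W d1]]
    show "eventually (\<lambda>x. PU ((1+d)/(1-d) * x) / Fb x - E d x / Fb x \<le> prob {\<omega>\<in>space M. W \<omega> > x} / Fb x) at_top"
      unfolding PU_def E_def by (intro always_eventually allI) (simp add: add_divide_distrib algebra_simps)
    from divide_Fb_mono[OF prob_greater_perturb(2)[OF U W d1]]
    show "eventually (\<lambda>x. prob {\<omega>\<in>space M. W \<omega> > x} / Fb x \<le> PU ((1-d)/(1+d) * x) / Fb x + E d x / Fb x) at_top"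
      unfolding PU_def E_def by (intro always_eventually allI) (simp add: add_divide_distrib)
  next
    show "((\<lambda>d. c * ((1+d)/(1-d)) powr (-\<gamma>) - 0) \<longlongrightarrow> c) (at_right 0)"
      "((\<lambda>d. c * ((1-d)/(1+d)) powr (-\<gamma>) + 0) \<longlongrightarrow> c) (at_right 0)"
      by (auto intro!: tendsto_eq_intros simp del: divide_const_simps)
  qed
qed

lemma tail_ratio_add_indep:
  assumes W: "W \<in> borel_measurable M" "\<And>\<omega>. \<omega> \<in> space M \<Longrightarrow> W \<omega> \<ge> 0" "tail_ratio W c"
    and V: "V \<in> borel_measurable M" "\<And>\<omega>. \<omega> \<in> space M \<Longrightarrow> V \<omega> \<ge> 0" "tail_ratio V c'"
    and ind: "indep_var borel W borel V"
  shows "tail_ratio (\<lambda>\<omega>. W \<omega> + V \<omega>) (c + c')"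
proof -
  define PW where "PW s = prob {\<omega>\<in>space M. W \<omega> > s}" for s
  define PV where "PV s = prob {\<omega>\<in>space M. V \<omega> > s}" for s
  show ?thesis unfolding tail_ratio_def
  proof (rule tendsto_by_approximants)
    fix d :: real assume d: "0 < d" "d < 1/2"
    have "((\<lambda>x. PV (1 * x)) \<longlongrightarrow> 0) at_top"
      unfolding PV_def by (rule tail_ratio_prob_tendsto_0[OF V(3)]) simp
    then show "((\<lambda>x. PW x / Fb x + PV x / Fb x - PW x / Fb x * PV (1 * x)) \<longlongrightarrow> c + c' - c * 0) at_top"
      using W(3) V(3) unfolding tail_ratio_def PW_def PV_def by (intro tendsto_intros)
    show "((\<lambda>x. PW ((1-d) * x) / Fb x + PV ((1-d) * x) / Fb x + PW (d * x) / Fb x * PV (d * x))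
        \<longlongrightarrow> c * (1-d) powr (-\<gamma>) + c' * (1-d) powr (-\<gamma>) + c * d powr (-\<gamma>) * 0) at_top"
      unfolding PW_def PV_def using d
      by (intro tendsto_add tendsto_mult tail_ratio_scaled tail_ratio_prob_tendsto_0[OF V(3)] W(3) V(3)) auto
    from divide_Fb_mono[OF prob_sum_greater_ge[OF W(1,2) V(1,2) ind]]
    show "eventually (\<lambda>x. PW x / Fb x + PV x / Fb x - PW x / Fb x * PV (1 * x)
        \<le> prob {\<omega>\<in>space M. W \<omega> + V \<omega> > x} / Fb x) at_top"
      unfolding PW_def PV_def by (intro always_eventually allI) (simp add: add_divide_distrib diff_divide_distrib)
    from divide_Fb_mono[OF prob_sum_greater_le[OF W(1) V(1) ind]]
    show "eventually (\<lambda>x. prob {\<omega>\<in>space M. W \<omega> + V \<omega> > x} / Fb x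
        \<le> PW ((1-d) * x) / Fb x + PV ((1-d) * x) / Fb x + PW (d * x) / Fb x * PV (d * x)) at_top"
      unfolding PW_def PV_def by (intro always_eventually allI) (simp add: add_divide_distrib)
  next
    show "((\<lambda>d. c + c' - c * 0) \<longlongrightarrow> c + c') (at_right 0)" by simp
    show "((\<lambda>d. c * (1-d) powr (-\<gamma>) + c' * (1-d) powr (-\<gamma>) + c * d powr (-\<gamma>) * 0) \<longlongrightarrow> c + c') (at_right 0)"
      by (auto intro!: tendsto_eq_intros)
  qed
qed

lemma tail_ratio_imp_asymp_equiv:
  assumes "tail_ratio U c" "c > 0"
  shows "(\<lambda>x. prob {\<omega>\<in>space M. U \<omega> > x}) \<sim>[at_top] (\<lambda>x. c * Fb x)"
  using assms unfolding tail_ratio_def by (intro asymp_equivI'_const) auto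

lemma tail_ratio_imp_regularly_varying:
  assumes "tail_ratio U c" "c > 0"
  shows "regularly_varying U \<gamma>"
  unfolding regularly_varying_def
proof (intro conjI allI impI index_nonneg)
  fix q :: real assume q: "q > 0"
  have "((\<lambda>x. (prob {\<omega>\<in>space M. U \<omega> > q * x} / Fb x) / (prob {\<omega>\<in>space M. U \<omega> > x} / Fb x))
      \<longlongrightarrow> (c * q powr (-\<gamma>)) / c) at_top"
    using assms q unfolding tail_ratio_def by (intro tendsto_divide tail_ratio_scaled[OF assms(1)]) auto
  then show "((\<lambda>x. prob {\<omega>\<in>space M. U \<omega> > q * x} / prob {\<omega>\<in>space M. U \<omega> > x}) \<longlongrightarrow> q powr (-\<gamma>)) at_top"
    using assms(2) by simp
qed

end

section \<open>Deviations of sums of i.i.d. variables\<close>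

lemma exp_le_quadratic:
  fixes x y :: real
  assumes "0 \<le> x" "x \<le> y"
  shows "exp x \<le> 1 + x + x^2 * exp y / 2"
proof -
  obtain t where t: "\<bar>t\<bar> \<le> \<bar>x\<bar>" "exp x = (\<Sum>m<2. x ^ m / fact m) + exp t / fact 2 * x ^ 2"
    using Maclaurin_exp_le[of x 2] by blast
  have "exp t \<le> exp y" using t(1) assms by auto
  then have "exp t / fact 2 * x ^ 2 \<le> x^2 * exp y / 2"
    by (simp add: fact_numeral mult_right_mono mult.commute)
  then show ?thesis using t(2) by (simp add: numeral_2_eq_2)
qed

lemma exp_neg_le_quadratic:
  fixes a :: real
  assumes "0 \<le> a"
  shows "exp (-a) \<le> 1 - a + a^2 / 2"
proof -
  obtain t where t: "exp (-a) = (\<Sum>m<3. (-a) ^ m / fact m) + exp t / fact 3 * (-a) ^ 3"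
    using Maclaurin_exp_le[of "-a" 3] by blast
  have "exp t / fact 3 * (-a) ^ 3 \<le> 0"
    using assms by (intro mult_nonneg_nonpos) (auto simp: power_odd_eq)
  moreover have "(\<Sum>m<3. (-a) ^ m / fact m) = 1 - a + a^2/2"
    by (simp add: numeral_3_eq_3 numeral_2_eq_2 fact_numeral power2_eq_square)
  ultimately show ?thesis using t by linarith
qed

context prob_space
begin

lemma distr_eq_integral:
  fixes g :: "nat \<Rightarrow> real"
  assumes "distr M (count_space UNIV) Z = distr M (count_space UNIV) Y"
    and "Z \<in> measurable M (count_space UNIV)" "Y \<in> measurable M (count_space UNIV)"
  shows "expectation (\<lambda>\<omega>. g (Z \<omega>)) = expectation (\<lambda>\<omega>. g (Y \<omega>))"
  using assms integral_distr[of Z M "count_space UNIV" g] integral_distr[of Y M "count_space UNIV" g]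
  by simp

lemma distr_eq_prob:
  assumes "distr M (count_space UNIV) Z = distr M (count_space UNIV) Y"
    and "Z \<in> measurable M (count_space UNIV)" "Y \<in> measurable M (count_space UNIV)"
  shows "prob {\<omega>\<in>space M. P (Z \<omega>)} = prob {\<omega>\<in>space M. P (Y \<omega>)}"
proof -
  have "prob {\<omega>\<in>space M. P (Z \<omega>)} = measure (distr M (count_space UNIV) Z) {k. P k}"
    using assms by (subst measure_distr) (auto simp: vimage_def Collect_conj_eq Int_commute)
  also have "\<dots> = measure (distr M (count_space UNIV) Y) {k. P k}" using assms(1) by simp
  also have "\<dots> = prob {\<omega>\<in>space M. P (Y \<omega>)}"
    using assms by (subst measure_distr) (auto simp: vimage_def Collect_conj_eq Int_commute)
  finally show ?thesis .
qed

lemma distr_eq_AE_zero: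
  assumes "distr M (count_space UNIV) Z = distr M (count_space UNIV) Y"
    and "Z \<in> measurable M (count_space UNIV)" "Y \<in> measurable M (count_space UNIV)"
    and "AE \<omega> in M. Y \<omega> = (0::nat)"
  shows "AE \<omega> in M. Z \<omega> = 0"
proof -
  have "AE k in distr M (count_space UNIV) Y. k = (0::nat)" using assms by (subst AE_distr_iff) auto
  then have "AE k in distr M (count_space UNIV) Z. k = (0::nat)" unfolding assms(1) .
  then show ?thesis using assms by (subst (asm) AE_distr_iff) auto
qed

lemma chernoff_bound_iid:
  fixes Z :: "'j \<Rightarrow> 'a \<Rightarrow> nat" and h :: "nat \<Rightarrow> real"
  assumes J: "finite J" and ind: "indep_vars (\<lambda>_. count_space UNIV) Z J"
    and dist: "\<And>j. j \<in> J \<Longrightarrow> distr M (count_space UNIV) (Z j) = distr M (count_space UNIV) Y"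
    and Y: "Y \<in> measurable M (count_space UNIV)"
    and h: "\<And>k. h k \<le> B"
  shows "prob {\<omega>\<in>space M. s \<le> (\<Sum>j\<in>J. h (Z j \<omega>))}
    \<le> exp (-s) * expectation (\<lambda>\<omega>. exp (h (Y \<omega>))) ^ card J"
proof -
  have Zm: "Z j \<in> measurable M (count_space UNIV)" if "j \<in> J" for j
    using ind that by (auto simp: indep_vars_def)
  have intZ: "integrable M (\<lambda>\<omega>. exp (h (Z j \<omega>)))" if "j \<in> J" for j
    using Zm[OF that] h by (intro integrable_const_bound[where B="exp B"]) auto
  have ind_exp: "indep_vars (\<lambda>_. borel) (\<lambda>j \<omega>. exp (h (Z j \<omega>))) J"
    by (rule indep_vars_compose2[OF ind]) auto
  have exp_sum: "exp (\<Sum>j\<in>J. h (Z j \<omega>)) = (\<Prod>j\<in>J. exp (h (Z j \<omega>)))" for \<omega>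
    using J by (simp add: exp_sum)
  have "expectation (\<lambda>\<omega>. exp (\<Sum>j\<in>J. h (Z j \<omega>))) = (\<Prod>j\<in>J. expectation (\<lambda>\<omega>. exp (h (Z j \<omega>))))"
    unfolding exp_sum by (rule indep_vars_lebesgue_integral[OF J ind_exp intZ])
  also have "\<dots> = (\<Prod>j\<in>J. expectation (\<lambda>\<omega>. exp (h (Y \<omega>))))"
    by (intro prod.cong refl distr_eq_integral dist Zm Y)
  also have "\<dots> = expectation (\<lambda>\<omega>. exp (h (Y \<omega>))) ^ card J" by simp
  finally have E: "expectation (\<lambda>\<omega>. exp (\<Sum>j\<in>J. h (Z j \<omega>))) = expectation (\<lambda>\<omega>. exp (h (Y \<omega>))) ^ card J" .
  have int: "integrable M (\<lambda>\<omega>. exp (\<Sum>j\<in>J. h (Z j \<omega>)))"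
    unfolding exp_sum by (rule indep_vars_integrable[OF J ind_exp intZ])
  have "prob {\<omega>\<in>space M. s \<le> (\<Sum>j\<in>J. h (Z j \<omega>))} \<le> prob {\<omega>\<in>space M. exp s \<le> exp (\<Sum>j\<in>J. h (Z j \<omega>))}"
    using Zm by (intro finite_measure_mono) (auto intro!: sets.sets_Collect_countable_Ex measurable_compose[OF _ borel_measurable_exp])
  also have "\<dots> \<le> expectation (\<lambda>\<omega>. exp (\<Sum>j\<in>J. h (Z j \<omega>))) / exp s"
    by (intro integral_Markov_inequality_measure[OF int, where A="space M"]) auto
  finally show ?thesis unfolding E by (simp add: exp_minus field_simps)
qed

end

locale nat_rv_moment = prob_space M for M :: "'a measure" +
  fixes Y :: "'a \<Rightarrow> nat" and r :: real
  assumes Y_measurable: "Y \<in> measurable M (count_space UNIV)"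
    and exponent_gt_1: "r > 1"
    and integrable_powr: "integrable M (\<lambda>\<omega>. real (Y \<omega>) powr r)"
begin

definition mean :: real where "mean = expectation (\<lambda>\<omega>. real (Y \<omega>))"

definition moment_const :: real where "moment_const = 1 + expectation (\<lambda>\<omega>. real (Y \<omega>) powr r)"

lemma Y_borel [measurable]: "(\<lambda>\<omega>. real (Y \<omega>)) \<in> borel_measurable M"
  using Y_measurable by (intro measurable_compose[OF Y_measurable]) auto

lemma moment_const_ge_1: "moment_const \<ge> 1"
  unfolding moment_const_def by (simp add: integral_nonneg_AE)

lemma integrable_bounded:
  fixes g :: "nat \<Rightarrow> real"
  assumes "\<And>k. \<bar>g k\<bar> \<le> B"
  shows "integrable M (\<lambda>\<omega>. g (Y \<omega>))"
  using assms by (intro integrable_const_bound[where B=B]) (auto intro!: AE_I2 measurable_compose[OF Y_measurable])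

lemma integrable_Y: "integrable M (\<lambda>\<omega>. real (Y \<omega>))"
proof (rule Bochner_Integration.integrable_bound)
  show "integrable M (\<lambda>\<omega>. 1 + real (Y \<omega>) powr r)" using integrable_powr by auto
  have "real k \<le> 1 + real k powr r" for k :: nat
  proof (cases "k = 0")
    case False
    then have "real k powr 1 \<le> real k powr r" using exponent_gt_1 by (intro powr_mono) auto
    then show ?thesis using False by simp
  qed simp
  then show "AE \<omega> in M. norm (real (Y \<omega>)) \<le> norm (1 + real (Y \<omega>) powr r)"
    by (intro AE_I2) auto
qed auto

lemma mean_nonneg: "mean \<ge> 0"
  unfolding mean_def by (simp add: integral_nonneg_AE)

lemma AE_zero_of_mean_zero:
  assumes "mean = 0" "distr M (count_space UNIV) Z = distr M (count_space UNIV) Y"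
    and "Z \<in> measurable M (count_space UNIV)"
  shows "AE \<omega> in M. Z \<omega> = 0"
proof -
  have "AE \<omega> in M. Y \<omega> = 0"
    using integral_nonneg_eq_0_iff_AE[OF integrable_Y] assms(1) unfolding mean_def by auto
  then show ?thesis by (rule distr_eq_AE_zero[OF assms(2,3) Y_measurable])
qed

lemma tail_le:
  assumes "y > 0"
  shows "prob {\<omega>\<in>space M. real (Y \<omega>) > y} \<le> moment_const * y powr (-r)"
proof -
  have "prob {\<omega>\<in>space M. real (Y \<omega>) > y} \<le> prob {\<omega>\<in>space M. y powr r \<le> real (Y \<omega>) powr r}"
    using assms exponent_gt_1 by (intro finite_measure_mono) (auto intro: powr_mono2)
  also have "\<dots> \<le> expectation (\<lambda>\<omega>. real (Y \<omega>) powr r) / y powr r"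
    using assms by (intro integral_Markov_inequality_measure[OF integrable_powr, where A="space M"]) auto
  also have "\<dots> \<le> moment_const / y powr r"
    unfolding moment_const_def using assms by (simp add: divide_right_mono)
  finally show ?thesis by (simp add: powr_minus divide_inverse)
qed

lemma truncated_square_le:
  assumes "y \<ge> 1"
  shows "(min (real k) y)^2 \<le> y powr (max 0 (2-r)) * (1 + real k powr r)"
proof (cases "real k \<le> 1")
  case True
  then have "(min (real k) y)^2 \<le> 1" using assms by (auto simp: power_le_one)
  also have "1 \<le> y powr (max 0 (2-r))" using assms by (simp add: ge_one_powr_ge_zero)
  also have "\<dots> \<le> y powr (max 0 (2-r)) * (1 + real k powr r)"
    by (simp add: algebra_simps)
  finally show ?thesis .
next
  case False
  show ?thesis
  proof (cases "r \<ge> 2")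
    case True
    have "(min (real k) y)^2 \<le> (real k)^2" using False assms by (intro power_mono) auto
    also have "\<dots> = real k powr 2" using False by (simp add: powr_realpow)
    also have "\<dots> \<le> real k powr r" using True False by (intro powr_mono) auto
    finally show ?thesis using True by simp
  next
    case r2: False
    define u where "u = min (real k) y"
    have u: "u \<ge> 1" "u \<le> y" "u \<le> real k" using False assms by (auto simp: u_def)
    have "u^2 = u powr r * u powr (2-r)" using u by (simp add: powr_add[symmetric] powr_realpow)
    also have "\<dots> \<le> real k powr r * y powr (2-r)"
      using u r2 exponent_gt_1 by (intro mult_mono powr_mono2) auto
    also have "\<dots> \<le> y powr (max 0 (2-r)) * (1 + real k powr r)"
      using r2 by (simp add: algebra_simps)
    finally show ?thesis by (simp add: u_def)
  qed
qed

lemma truncated_second_moment_le: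
  assumes "y \<ge> 1"
  shows "expectation (\<lambda>\<omega>. (min (real (Y \<omega>)) y)^2) \<le> moment_const * y powr (max 0 (2-r))"
proof -
  have "expectation (\<lambda>\<omega>. (min (real (Y \<omega>)) y)^2)
      \<le> expectation (\<lambda>\<omega>. y powr (max 0 (2-r)) * (1 + real (Y \<omega>) powr r))"
  proof (rule integral_mono)
    show "integrable M (\<lambda>\<omega>. (min (real (Y \<omega>)) y)^2)"
      using assms by (intro integrable_bounded[where B="y^2"]) (auto simp: min_def intro: power_mono)
  qed (use integrable_powr truncated_square_le[OF assms] in auto)
  also have "\<dots> = moment_const * y powr (max 0 (2-r))"
    unfolding moment_const_def using integrable_powr by (simp add: prob_space)
  finally show ?thesis .
qed

lemma truncated_mean_le:
  assumes "y > 0"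
  shows "expectation (\<lambda>\<omega>. min (real (Y \<omega>)) y) \<le> mean"
    and "mean - expectation (\<lambda>\<omega>. min (real (Y \<omega>)) y) \<le> moment_const * y powr (1-r)"
proof -
  have int_min: "integrable M (\<lambda>\<omega>. min (real (Y \<omega>)) y)"
    using assms by (intro integrable_bounded[where B=y]) auto
  then show "expectation (\<lambda>\<omega>. min (real (Y \<omega>)) y) \<le> mean"
    unfolding mean_def using integrable_Y by (intro integral_mono) auto
  have pointwise: "real k - min (real k) y \<le> real k powr r * y powr (1-r)" for k
  proof (cases "real k \<le> y")
    case False
    then have "real k - min (real k) y \<le> real k powr r * real k powr (1-r)"
      using assms by (simp add: powr_add[symmetric])
    also have "\<dots> \<le> real k powr r * y powr (1-r)"
      using False assms exponent_gt_1 by (intro mult_left_mono powr_mono2') auto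
    finally show ?thesis .
  qed simp
  have "mean - expectation (\<lambda>\<omega>. min (real (Y \<omega>)) y) = expectation (\<lambda>\<omega>. real (Y \<omega>) - min (real (Y \<omega>)) y)"
    unfolding mean_def using integrable_Y int_min by simp
  also have "\<dots> \<le> expectation (\<lambda>\<omega>. real (Y \<omega>) powr r * y powr (1-r))"
    using pointwise integrable_Y int_min integrable_powr by (intro integral_mono) auto
  also have "\<dots> \<le> moment_const * y powr (1-r)"
    unfolding moment_const_def by (simp add: mult_right_mono)
  finally show "mean - expectation (\<lambda>\<omega>. min (real (Y \<omega>)) y) \<le> moment_const * y powr (1-r)" .
qed

lemma mgf_truncated_upper:
  assumes y: "y \<ge> 1" and lam: "lam > 0"
  shows "expectation (\<lambda>\<omega>. exp (lam * min (real (Y \<omega>)) y))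
    \<le> exp (lam * mean + lam^2 * exp (lam*y) * (moment_const * y powr (max 0 (2-r))) / 2)"
proof -
  define V where "V = expectation (\<lambda>\<omega>. (min (real (Y \<omega>)) y)^2)"
  define m' where "m' = expectation (\<lambda>\<omega>. min (real (Y \<omega>)) y)"
  have int_min: "integrable M (\<lambda>\<omega>. min (real (Y \<omega>)) y)"
    using y by (intro integrable_bounded[where B=y]) auto
  have int_sq: "integrable M (\<lambda>\<omega>. (min (real (Y \<omega>)) y)^2)"
    using y by (intro integrable_bounded[where B="y^2"]) (auto simp: min_def intro: power_mono)
  have "expectation (\<lambda>\<omega>. exp (lam * min (real (Y \<omega>)) y)) \<le>
      expectation (\<lambda>\<omega>. 1 + lam * min (real (Y \<omega>)) y + (lam^2 * exp (lam*y) / 2) * (min (real (Y \<omega>)) y)^2)"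
  proof (rule integral_mono)
    show "integrable M (\<lambda>\<omega>. exp (lam * min (real (Y \<omega>)) y))"
      using lam y by (intro integrable_bounded[where B="exp (lam*y)"]) (auto simp: mult_left_mono)
    fix \<omega> assume "\<omega> \<in> space M"
    have "exp (lam * min (real (Y \<omega>)) y) \<le> 1 + lam * min (real (Y \<omega>)) y + (lam * min (real (Y \<omega>)) y)^2 * exp (lam*y) / 2"
      using lam y by (intro exp_le_quadratic) (auto simp: mult_left_mono)
    then show "exp (lam * min (real (Y \<omega>)) y) \<le> 1 + lam * min (real (Y \<omega>)) y + (lam^2 * exp (lam*y) / 2) * (min (real (Y \<omega>)) y)^2"
      by (simp add: power_mult_distrib field_simps)
  qed (use int_min int_sq in auto)
  also have "\<dots> = 1 + lam * m' + (lam^2 * exp (lam*y) / 2) * V"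
    unfolding m'_def V_def using int_min int_sq by (simp add: prob_space)
  also have "\<dots> \<le> exp (lam * m' + (lam^2 * exp (lam*y) / 2) * V)"
    using exp_ge_add_one_self[of "lam * m' + (lam^2 * exp (lam*y) / 2) * V"] by linarith
  also have "\<dots> \<le> exp (lam * mean + lam^2 * exp (lam*y) * (moment_const * y powr (max 0 (2-r))) / 2)"
    using truncated_mean_le(1)[of y] truncated_second_moment_le[OF y] lam y
    unfolding m'_def V_def by (auto intro!: add_mono mult_left_mono divide_right_mono)
  finally show ?thesis .
qed

lemma mgf_truncated_lower:
  assumes y: "y \<ge> 1" and lam: "lam > 0"
  shows "expectation (\<lambda>\<omega>. exp (-lam * min (real (Y \<omega>)) y))
    \<le> exp (-lam * mean + lam * (moment_const * y powr (1-r)) + lam^2 * (moment_const * y powr (max 0 (2-r))) / 2)"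
proof -
  define V where "V = expectation (\<lambda>\<omega>. (min (real (Y \<omega>)) y)^2)"
  define m' where "m' = expectation (\<lambda>\<omega>. min (real (Y \<omega>)) y)"
  have int_min: "integrable M (\<lambda>\<omega>. min (real (Y \<omega>)) y)"
    using y by (intro integrable_bounded[where B=y]) auto
  have int_sq: "integrable M (\<lambda>\<omega>. (min (real (Y \<omega>)) y)^2)"
    using y by (intro integrable_bounded[where B="y^2"]) (auto simp: min_def intro: power_mono)
  have "expectation (\<lambda>\<omega>. exp (-lam * min (real (Y \<omega>)) y)) \<le>
      expectation (\<lambda>\<omega>. 1 - lam * min (real (Y \<omega>)) y + (lam^2 / 2) * (min (real (Y \<omega>)) y)^2)"
  proof (rule integral_mono)
    show "integrable M (\<lambda>\<omega>. exp (-lam * min (real (Y \<omega>)) y))"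
      using lam y by (intro integrable_bounded[where B=1]) auto
    fix \<omega> assume "\<omega> \<in> space M"
    have "exp (-(lam * min (real (Y \<omega>)) y)) \<le> 1 - lam * min (real (Y \<omega>)) y + (lam * min (real (Y \<omega>)) y)^2 / 2"
      using lam y by (intro exp_neg_le_quadratic) auto
    then show "exp (-lam * min (real (Y \<omega>)) y) \<le> 1 - lam * min (real (Y \<omega>)) y + (lam^2 / 2) * (min (real (Y \<omega>)) y)^2"
      by (simp add: power_mult_distrib field_simps)
  qed (use int_min int_sq in auto)
  also have "\<dots> = 1 - lam * m' + (lam^2 / 2) * V"
    unfolding m'_def V_def using int_min int_sq by (simp add: prob_space)
  also have "\<dots> \<le> exp (-lam * m' + (lam^2 / 2) * V)"
    using exp_ge_add_one_self[of "-lam * m' + (lam^2 / 2) * V"] by linarith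
  also have "\<dots> \<le> exp (-lam * mean + lam * (moment_const * y powr (1-r)) + lam^2 * (moment_const * y powr (max 0 (2-r))) / 2)"
  proof -
    have "lam * (mean - m') \<le> lam * (moment_const * y powr (1-r))"
      using truncated_mean_le(2)[of y] lam y unfolding m'_def by (intro mult_left_mono) auto
    moreover have "lam^2 / 2 * V \<le> lam^2 * (moment_const * y powr (max 0 (2-r))) / 2"
      using truncated_second_moment_le[OF y] unfolding V_def by (simp add: mult_left_mono divide_right_mono)
    ultimately show ?thesis by (simp add: algebra_simps)
  qed
  finally show ?thesis .
qed

lemma sum_upper_deviation:
  fixes Z :: "'j \<Rightarrow> 'a \<Rightarrow> nat"
  assumes J: "finite J" and ind: "indep_vars (\<lambda>_. count_space UNIV) Z J"
    and dist: "\<And>j. j \<in> J \<Longrightarrow> distr M (count_space UNIV) (Z j) = distr M (count_space UNIV) Y"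
    and y: "y \<ge> 1" and lam: "lam > 0"
  shows "prob {\<omega>\<in>space M. real (card J) * mean + t \<le> (\<Sum>j\<in>J. real (Z j \<omega>))}
    \<le> real (card J) * (moment_const * y powr (-r))
      + exp (-lam*t + real (card J) * lam^2 * exp (lam*y) * (moment_const * y powr (max 0 (2-r))) / 2)"
proof -
  define n where "n = real (card J)"
  have Z: "Z j \<in> measurable M (count_space UNIV)" if "j \<in> J" for j
    using ind that by (auto simp: indep_vars_def)
  have Z_borel: "(\<lambda>\<omega>. real (Z j \<omega>)) \<in> borel_measurable M" if "j \<in> J" for j
    using Z[OF that] by (intro measurable_compose[OF Z[OF that]]) auto
  let ?big = "\<Union>j\<in>J. {\<omega>\<in>space M. real (Z j \<omega>) > y}"
  let ?trunc = "{\<omega>\<in>space M. lam * (n * mean + t) \<le> (\<Sum>j\<in>J. lam * min (real (Z j \<omega>)) y)}"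
  have "{\<omega>\<in>space M. n * mean + t \<le> (\<Sum>j\<in>J. real (Z j \<omega>))} \<subseteq> ?big \<union> ?trunc"
  proof
    fix \<omega> assume \<omega>: "\<omega> \<in> {\<omega>\<in>space M. n * mean + t \<le> (\<Sum>j\<in>J. real (Z j \<omega>))}"
    show "\<omega> \<in> ?big \<union> ?trunc"
    proof (cases "\<omega> \<in> ?big")
      case False
      then have "(\<Sum>j\<in>J. lam * min (real (Z j \<omega>)) y) = lam * (\<Sum>j\<in>J. real (Z j \<omega>))"
        using \<omega> by (auto simp: sum_distrib_left not_less intro!: sum.cong min_absorb1)
      then show ?thesis using \<omega> lam by (auto intro: mult_left_mono)
    qed auto
  qed
  then have "prob {\<omega>\<in>space M. n * mean + t \<le> (\<Sum>j\<in>J. real (Z j \<omega>))} \<le> prob ?big + prob ?trunc"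
    using J Z_borel by (intro prob_le_cover) (auto intro!: sets.finite_UN)
  also have "prob ?big \<le> (\<Sum>j\<in>J. prob {\<omega>\<in>space M. real (Z j \<omega>) > y})"
    using J Z_borel by (intro finite_measure_subadditive_finite) auto
  also have "\<dots> = (\<Sum>j\<in>J. prob {\<omega>\<in>space M. real (Y \<omega>) > y})"
    by (intro sum.cong refl distr_eq_prob dist Z Y_measurable)
  also have "\<dots> = n * prob {\<omega>\<in>space M. real (Y \<omega>) > y}"
    unfolding n_def by simp
  also have "\<dots> \<le> n * (moment_const * y powr (-r))"
    unfolding n_def using tail_le[of y] y by (intro mult_left_mono) auto
  also have "prob ?trunc \<le> exp (-(lam * (n * mean + t))) * expectation (\<lambda>\<omega>. exp (lam * min (real (Y \<omega>)) y)) ^ card J"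
    using lam y by (intro chernoff_bound_iid[OF J ind dist Y_measurable, where B="lam*y"])
      (auto simp: mult_left_mono)
  also have "\<dots> \<le> exp (-(lam * (n * mean + t)))
      * exp (lam * mean + lam^2 * exp (lam*y) * (moment_const * y powr (max 0 (2-r))) / 2) ^ card J"
    using y lam by (intro mult_left_mono power_mono mgf_truncated_upper) (auto intro: integral_nonneg_AE)
  also have "\<dots> = exp (-lam*t + n * lam^2 * exp (lam*y) * (moment_const * y powr (max 0 (2-r))) / 2)"
    unfolding n_def by (simp add: exp_of_nat_mult[symmetric] exp_add[symmetric] algebra_simps)
  finally show ?thesis unfolding n_def by simp
qed

lemma sum_lower_deviation:
  fixes Z :: "'j \<Rightarrow> 'a \<Rightarrow> nat"
  assumes J: "finite J" and ind: "indep_vars (\<lambda>_. count_space UNIV) Z J"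
    and dist: "\<And>j. j \<in> J \<Longrightarrow> distr M (count_space UNIV) (Z j) = distr M (count_space UNIV) Y"
    and y: "y \<ge> 1" and lam: "lam > 0"
  shows "prob {\<omega>\<in>space M. (\<Sum>j\<in>J. real (Z j \<omega>)) \<le> real (card J) * mean - t}
    \<le> exp (-lam*t + real (card J) * lam * (moment_const * y powr (1-r))
      + real (card J) * lam^2 * (moment_const * y powr (max 0 (2-r))) / 2)"
proof -
  define n where "n = real (card J)"
  have Z: "Z j \<in> measurable M (count_space UNIV)" if "j \<in> J" for j
    using ind that by (auto simp: indep_vars_def)
  have Z_borel: "(\<lambda>\<omega>. real (Z j \<omega>)) \<in> borel_measurable M" if "j \<in> J" for j
    using Z[OF that] by (intro measurable_compose[OF Z[OF that]]) auto
  let ?trunc = "{\<omega>\<in>space M. -lam * (n * mean - t) \<le> (\<Sum>j\<in>J. -lam * min (real (Z j \<omega>)) y)}"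
  have "{\<omega>\<in>space M. (\<Sum>j\<in>J. real (Z j \<omega>)) \<le> n * mean - t} \<subseteq> ?trunc"
  proof
    fix \<omega> assume \<omega>: "\<omega> \<in> {\<omega>\<in>space M. (\<Sum>j\<in>J. real (Z j \<omega>)) \<le> n * mean - t}"
    have "(\<Sum>j\<in>J. min (real (Z j \<omega>)) y) \<le> (\<Sum>j\<in>J. real (Z j \<omega>))" by (intro sum_mono) auto
    then have "lam * (\<Sum>j\<in>J. min (real (Z j \<omega>)) y) \<le> lam * (n * mean - t)"
      using \<omega> lam by (intro mult_left_mono) auto
    then show "\<omega> \<in> ?trunc" using \<omega> by (simp add: sum_negf sum_distrib_left)
  qed
  moreover have "?trunc \<in> events" using Z_borel by measurable
  ultimately have "prob {\<omega>\<in>space M. (\<Sum>j\<in>J. real (Z j \<omega>)) \<le> n * mean - t} \<le> prob ?trunc"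
    by (rule finite_measure_mono)
  also have "\<dots> \<le> exp (-(-lam * (n * mean - t))) * expectation (\<lambda>\<omega>. exp (-lam * min (real (Y \<omega>)) y)) ^ card J"
    using lam y by (intro chernoff_bound_iid[OF J ind dist Y_measurable, where B=0]) auto
  also have "\<dots> \<le> exp (-(-lam * (n * mean - t))) * exp (-lam * mean + lam * (moment_const * y powr (1-r))
      + lam^2 * (moment_const * y powr (max 0 (2-r))) / 2) ^ card J"
    using y lam by (intro mult_left_mono power_mono mgf_truncated_lower) (auto intro: integral_nonneg_AE)
  also have "\<dots> = exp (-lam*t + n * lam * (moment_const * y powr (1-r))
      + n * lam^2 * (moment_const * y powr (max 0 (2-r))) / 2)"
    unfolding n_def by (simp add: exp_of_nat_mult[symmetric] exp_add[symmetric] algebra_simps)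
  finally show ?thesis unfolding n_def .
qed

(* Chernoff parameters at scale T: the rate lam = r ln T / (delta T) gives exp (-lam delta T) = T^-r and the
   truncation level y = theta delta T / r gives exp (lam y) = T^theta. Since theta + max 0 (2-r) = 1 - theta,
   the variance term T lam^2 exp (lam y) y^(max 0 (2-r)) then decays like T^-theta up to logarithms. *)
definition ld_theta :: real where "ld_theta = min 1 (r - 1) / 2"

definition ld_rate :: "real \<Rightarrow> real \<Rightarrow> real" where "ld_rate \<delta> T = r * ln T / (\<delta> * T)"

definition ld_level :: "real \<Rightarrow> real \<Rightarrow> real" where "ld_level \<delta> T = ld_theta * \<delta> * T / r"

lemma ld_theta_bounds: "ld_theta > 0" "ld_theta + max 0 (2-r) = 1 - ld_theta"
  unfolding ld_theta_def using exponent_gt_1 by (auto simp: min_def max_def)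

lemma exp_ld_rate: "\<delta> > 0 \<Longrightarrow> T > 0 \<Longrightarrow> exp (-(ld_rate \<delta> T * (\<delta> * T))) = T powr (-r)"
  unfolding ld_rate_def by (simp add: powr_def)

lemma exp_ld_rate_level: "\<delta> > 0 \<Longrightarrow> T > 0 \<Longrightarrow> exp (ld_rate \<delta> T * ld_level \<delta> T) = T powr ld_theta"
  unfolding ld_rate_def ld_level_def using exponent_gt_1 by (simp add: powr_def mult.commute)

lemma ld_level_powr:
  "\<delta> > 0 \<Longrightarrow> T > 0 \<Longrightarrow> ld_level \<delta> T powr a = (ld_theta * \<delta> / r) powr a * T powr a"
  unfolding ld_level_def using ld_theta_bounds exponent_gt_1 by (simp add: powr_mult[symmetric])

lemma deviation_parameters:
  assumes \<delta>: "\<delta> > 0"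
  obtains T0 where "\<And>T. T \<ge> T0 \<Longrightarrow> T \<ge> 2 \<and> ld_level \<delta> T \<ge> 1
    \<and> T * ld_rate \<delta> T ^ 2 * exp (ld_rate \<delta> T * ld_level \<delta> T)
        * (moment_const * ld_level \<delta> T powr (max 0 (2-r))) / 2 \<le> 1
    \<and> T * ld_rate \<delta> T * (moment_const * ld_level \<delta> T powr (1-r)) \<le> 1"
proof -
  define \<theta> where "\<theta> = ld_theta"
  define w where "w = max 0 (2-r)"
  have \<theta>: "\<theta> > 0" "\<theta> + w = 1 - \<theta>" unfolding \<theta>_def w_def by (fact ld_theta_bounds)+
  have r: "r > 0" using exponent_gt_1 by simp
  define cb where "cb = r^2 * moment_const * (\<theta>*\<delta>/r) powr w / (2*\<delta>^2)"
  define cc where "cc = r * moment_const * (\<theta>*\<delta>/r) powr (1-r) / \<delta>"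
  have "((\<lambda>T. cb * ln T ^ 2 * T powr (-\<theta>)) \<longlongrightarrow> 0) at_top"
    using \<theta> by real_asymp
  moreover have "((\<lambda>T. cc * ln T * T powr (1-r)) \<longlongrightarrow> 0) at_top"
    using exponent_gt_1 by real_asymp
  ultimately have "eventually (\<lambda>T. cb * ln T ^ 2 * T powr (-\<theta>) < 1) at_top"
      "eventually (\<lambda>T. cc * ln T * T powr (1-r) < 1) at_top"
    by (auto intro: order_tendstoD(2))
  then have "eventually (\<lambda>T. 2 \<le> T \<and> r/(\<theta>*\<delta>) \<le> T \<and> cb * ln T ^ 2 * T powr (-\<theta>) < 1
      \<and> cc * ln T * T powr (1-r) < 1) at_top"
    using eventually_ge_at_top[of 2] eventually_ge_at_top[of "r/(\<theta>*\<delta>)"] by eventually_elim auto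
  then obtain T0 where T0: "\<And>T. T \<ge> T0 \<Longrightarrow> 2 \<le> T \<and> r/(\<theta>*\<delta>) \<le> T
      \<and> cb * ln T ^ 2 * T powr (-\<theta>) < 1 \<and> cc * ln T * T powr (1-r) < 1"
    by (auto simp: eventually_at_top_linorder)
  show thesis
  proof (rule that[of T0], intro conjI)
    fix T assume "T \<ge> T0"
    note T = T0[OF this]
    have Tpos: "T > 0" using T by simp
    note level = ld_level_powr[OF \<delta> Tpos, folded \<theta>_def]
    show "T \<ge> 2" using T by simp
    show "ld_level \<delta> T \<ge> 1"
      unfolding ld_level_def \<theta>_def[symmetric] using T \<theta> \<delta> r by (simp add: field_simps)
    have "T * ld_rate \<delta> T ^ 2 * exp (ld_rate \<delta> T * ld_level \<delta> T) * (moment_const * ld_level \<delta> T powr w) / 2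
        = cb * ln T ^ 2 * (T * (T powr \<theta> * T powr w) / T^2)"
      unfolding exp_ld_rate_level[OF \<delta> Tpos, folded \<theta>_def] level unfolding cb_def ld_rate_def
      using \<delta> Tpos r by (simp add: field_simps power2_eq_square)
    also have "T * (T powr \<theta> * T powr w) / T^2 = T powr (-\<theta>)"
      using Tpos \<theta> by (simp add: powr_add[symmetric] powr_diff power2_eq_square powr_minus field_simps)
    finally show "T * ld_rate \<delta> T ^ 2 * exp (ld_rate \<delta> T * ld_level \<delta> T)
        * (moment_const * ld_level \<delta> T powr (max 0 (2-r))) / 2 \<le> 1"
      using T unfolding w_def by simp
    have "T * ld_rate \<delta> T * (moment_const * ld_level \<delta> T powr (1-r)) = cc * ln T * T powr (1-r)"
      unfolding level cc_def ld_rate_def using \<delta> Tpos r by (simp add: field_simps)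
    then show "T * ld_rate \<delta> T * (moment_const * ld_level \<delta> T powr (1-r)) \<le> 1"
      using T by simp
  qed
qed

lemma mult_le_one_of_le:
  fixes n T z :: real
  assumes "0 \<le> n" "n \<le> T" "z \<ge> 0" "T * z \<le> 1"
  shows "n * z \<le> 1"
  using mult_right_mono[of n T z] assms by simp

lemma upper_deviation_at_level:
  fixes Z :: "'j \<Rightarrow> 'a \<Rightarrow> nat"
  assumes J: "finite J" and ind: "indep_vars (\<lambda>_. count_space UNIV) Z J"
    and dist: "\<And>j. j \<in> J \<Longrightarrow> distr M (count_space UNIV) (Z j) = distr M (count_space UNIV) Y"
    and \<delta>: "\<delta> > 0" and T: "real (card J) \<le> T" "T \<ge> 2" "ld_level \<delta> T \<ge> 1"
    and var: "T * ld_rate \<delta> T ^ 2 * exp (ld_rate \<delta> T * ld_level \<delta> T)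
        * (moment_const * ld_level \<delta> T powr (max 0 (2-r))) / 2 \<le> 1"
  shows "prob {\<omega>\<in>space M. real (card J) * mean + \<delta> * T \<le> (\<Sum>j\<in>J. real (Z j \<omega>))}
    \<le> (real (card J) * moment_const * (ld_theta * \<delta> / r) powr (-r) + exp 1) * T powr (-r)"
proof -
  define n where "n = real (card J)"
  define lam where "lam = ld_rate \<delta> T"
  define y where "y = ld_level \<delta> T"
  have lam: "lam > 0" unfolding lam_def ld_rate_def using T \<delta> exponent_gt_1 by simp
  have var_T: "T * (lam^2 * exp (lam*y) * (moment_const * y powr (max 0 (2-r))) / 2) \<le> 1"
    using var unfolding lam_def y_def by (simp only: times_divide_eq_right mult.assoc)
  have "n * (lam^2 * exp (lam*y) * (moment_const * y powr (max 0 (2-r))) / 2) \<le> 1"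
    by (rule mult_le_one_of_le[of _ T]) (use var_T T(1) moment_const_ge_1 in \<open>auto simp: n_def\<close>)
  then have "exp (-lam * (\<delta> * T) + n * lam^2 * exp (lam*y) * (moment_const * y powr (max 0 (2-r))) / 2)
      \<le> exp (-(lam * (\<delta> * T)) + 1)"
    by (simp add: mult.assoc)
  also have "\<dots> = exp 1 * T powr (-r)"
    unfolding exp_add lam_def using exp_ld_rate[OF \<delta>] T by simp
  finally have exp_le: "exp (-lam * (\<delta> * T) + n * lam^2 * exp (lam*y) * (moment_const * y powr (max 0 (2-r))) / 2)
      \<le> exp 1 * T powr (-r)" .
  have "prob {\<omega>\<in>space M. n * mean + \<delta> * T \<le> (\<Sum>j\<in>J. real (Z j \<omega>))}
      \<le> n * (moment_const * y powr (-r))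
        + exp (-lam * (\<delta> * T) + n * lam^2 * exp (lam*y) * (moment_const * y powr (max 0 (2-r))) / 2)"
    unfolding n_def by (rule sum_upper_deviation[OF J ind dist T(3)[folded y_def] lam])
  also have "\<dots> \<le> n * (moment_const * y powr (-r)) + exp 1 * T powr (-r)"
    using exp_le by (rule add_left_mono)
  moreover have "y powr (-r) = (ld_theta * \<delta> / r) powr (-r) * T powr (-r)"
    unfolding y_def using ld_level_powr[OF \<delta>] T by simp
  ultimately show ?thesis unfolding n_def by (simp add: algebra_simps)
qed

lemma lower_deviation_at_level:
  fixes Z :: "'j \<Rightarrow> 'a \<Rightarrow> nat"
  assumes J: "finite J" and ind: "indep_vars (\<lambda>_. count_space UNIV) Z J"
    and dist: "\<And>j. j \<in> J \<Longrightarrow> distr M (count_space UNIV) (Z j) = distr M (count_space UNIV) Y"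
    and \<delta>: "\<delta> > 0" and T: "real (card J) \<le> T" "T \<ge> 2" "ld_level \<delta> T \<ge> 1"
    and var: "T * ld_rate \<delta> T ^ 2 * exp (ld_rate \<delta> T * ld_level \<delta> T)
        * (moment_const * ld_level \<delta> T powr (max 0 (2-r))) / 2 \<le> 1"
    and gap: "T * ld_rate \<delta> T * (moment_const * ld_level \<delta> T powr (1-r)) \<le> 1"
  shows "prob {\<omega>\<in>space M. (\<Sum>j\<in>J. real (Z j \<omega>)) \<le> real (card J) * mean - \<delta> * T} \<le> exp 2 * T powr (-r)"
proof -
  define n where "n = real (card J)"
  define lam where "lam = ld_rate \<delta> T"
  define y where "y = ld_level \<delta> T"
  have lam: "lam > 0" unfolding lam_def ld_rate_def using T \<delta> exponent_gt_1 by simp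
  have "T * (lam^2 * (moment_const * y powr (max 0 (2-r))) / 2)
      \<le> exp (lam*y) * (T * (lam^2 * (moment_const * y powr (max 0 (2-r))) / 2))"
  proof -
    have "1 \<le> exp (lam*y)" using lam T(3) unfolding y_def by simp
    moreover have "0 \<le> T * (lam^2 * (moment_const * y powr (max 0 (2-r))) / 2)"
      using T moment_const_ge_1 by simp
    ultimately show ?thesis
      using mult_right_mono[of 1 "exp (lam*y)" "T * (lam^2 * (moment_const * y powr (max 0 (2-r))) / 2)"] by simp
  qed
  also have "\<dots> \<le> 1"
    using var unfolding lam_def y_def by (simp only: times_divide_eq_right mult.assoc mult.left_commute)
  finally have var_T: "T * (lam^2 * (moment_const * y powr (max 0 (2-r))) / 2) \<le> 1" .
  have gap_T: "T * (lam * (moment_const * y powr (1-r))) \<le> 1"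
    using gap unfolding lam_def y_def by (simp only: mult.assoc)
  have "n * (lam^2 * (moment_const * y powr (max 0 (2-r))) / 2) \<le> 1"
    "n * (lam * (moment_const * y powr (1-r))) \<le> 1"
    by (rule mult_le_one_of_le[of _ T]; use var_T gap_T T(1) moment_const_ge_1 lam in \<open>auto simp: n_def\<close>)+
  then have "exp (-lam * (\<delta> * T) + n * lam * (moment_const * y powr (1-r))
      + n * lam^2 * (moment_const * y powr (max 0 (2-r))) / 2) \<le> exp (-(lam * (\<delta> * T)) + 2)"
    by (simp add: mult.assoc)
  also have "\<dots> = exp 2 * T powr (-r)"
    unfolding exp_add lam_def using exp_ld_rate[OF \<delta>] T by simp
  finally have exp_le: "exp (-lam * (\<delta> * T) + n * lam * (moment_const * y powr (1-r))
      + n * lam^2 * (moment_const * y powr (max 0 (2-r))) / 2) \<le> exp 2 * T powr (-r)" .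
  have "prob {\<omega>\<in>space M. (\<Sum>j\<in>J. real (Z j \<omega>)) \<le> n * mean - \<delta> * T}
      \<le> exp (-lam * (\<delta> * T) + n * lam * (moment_const * y powr (1-r))
        + n * lam^2 * (moment_const * y powr (max 0 (2-r))) / 2)"
    unfolding n_def by (rule sum_lower_deviation[OF J ind dist T(3)[folded y_def] lam])
  with exp_le show ?thesis unfolding n_def by (rule order_trans[rotated])
qed

lemma sum_deviation_bound:
  assumes \<delta>: "\<delta> > 0"
  obtains C T0 where "C > 0" "\<And>(J::'j set) Z x. finite J \<Longrightarrow> indep_vars (\<lambda>_. count_space UNIV) Z J \<Longrightarrow>
     (\<And>j. j \<in> J \<Longrightarrow> distr M (count_space UNIV) (Z j) = distr M (count_space UNIV) Y) \<Longrightarrow> x \<ge> T0 \<Longrightarrow>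
     prob {\<omega>\<in>space M. \<bar>(\<Sum>j\<in>J. real (Z j \<omega>)) - real (card J) * mean\<bar> > \<delta> * (real (card J) + x)}
       \<le> C * (real (card J) + 1) * (real (card J) + x) powr (-r)"
proof -
  obtain T0 where T0: "\<And>T. T \<ge> T0 \<Longrightarrow> T \<ge> 2 \<and> ld_level \<delta> T \<ge> 1
    \<and> T * ld_rate \<delta> T ^ 2 * exp (ld_rate \<delta> T * ld_level \<delta> T)
        * (moment_const * ld_level \<delta> T powr (max 0 (2-r))) / 2 \<le> 1
    \<and> T * ld_rate \<delta> T * (moment_const * ld_level \<delta> T powr (1-r)) \<le> 1"
    using deviation_parameters[OF \<delta>] by blast
  define C where "C = moment_const * (ld_theta * \<delta> / r) powr (-r) + exp 1 + exp 2"
  have "prob {\<omega>\<in>space M. \<bar>(\<Sum>j\<in>J. real (Z j \<omega>)) - real (card J) * mean\<bar> > \<delta> * (real (card J) + x)}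
       \<le> C * (real (card J) + 1) * (real (card J) + x) powr (-r)"
    if J: "finite J" and ind: "indep_vars (\<lambda>_. count_space UNIV) Z J"
      and dist: "\<And>j. j \<in> J \<Longrightarrow> distr M (count_space UNIV) (Z j) = distr M (count_space UNIV) Y"
      and x: "x \<ge> max T0 0" for J :: "'j set" and Z x
  proof -
    define n where "n = real (card J)"
    define T where "T = n + x"
    have n: "0 \<le> n" "n \<le> T" unfolding n_def T_def using x by auto
    have "T \<ge> T0" unfolding T_def using x n by auto
    note T = T0[OF this]
    have Z: "(\<lambda>\<omega>. real (Z j \<omega>)) \<in> borel_measurable M" if "j \<in> J" for j
      using ind that by (auto simp: indep_vars_def intro: measurable_compose)
    have "prob {\<omega>\<in>space M. \<bar>(\<Sum>j\<in>J. real (Z j \<omega>)) - n * mean\<bar> > \<delta> * T}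
        \<le> prob {\<omega>\<in>space M. n * mean + \<delta> * T \<le> (\<Sum>j\<in>J. real (Z j \<omega>))}
          + prob {\<omega>\<in>space M. (\<Sum>j\<in>J. real (Z j \<omega>)) \<le> n * mean - \<delta> * T}"
    proof (rule prob_le_cover)
      show "{\<omega>\<in>space M. n * mean + \<delta> * T \<le> (\<Sum>j\<in>J. real (Z j \<omega>))} \<in> events"
        "{\<omega>\<in>space M. (\<Sum>j\<in>J. real (Z j \<omega>)) \<le> n * mean - \<delta> * T} \<in> events"
        using Z by measurable
    qed auto
    also have "\<dots> \<le> (n * moment_const * (ld_theta * \<delta> / r) powr (-r) + exp 1) * T powr (-r) + exp 2 * T powr (-r)"
      using T n unfolding n_def
      by (intro add_mono upper_deviation_at_level[OF J ind dist \<delta>] lower_deviation_at_level[OF J ind dist \<delta>]) auto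
    also have "\<dots> = (n * moment_const * (ld_theta * \<delta> / r) powr (-r) + exp 1 + exp 2) * T powr (-r)"
      by (simp add: algebra_simps)
    also have "\<dots> \<le> C * (n + 1) * T powr (-r)"
    proof (rule mult_right_mono)
      have "0 \<le> moment_const * (ld_theta * \<delta> / r) powr (-r)" "0 \<le> n * exp 1" "0 \<le> n * exp 2"
        using moment_const_ge_1 n by auto
      then show "n * moment_const * (ld_theta * \<delta> / r) powr (-r) + exp 1 + exp 2 \<le> C * (n + 1)"
        unfolding C_def by (simp add: algebra_simps)
    qed simp
    finally show ?thesis unfolding n_def T_def .
  qed
  moreover have "C > 0" unfolding C_def using moment_const_ge_1 by (simp add: add_nonneg_pos)
  ultimately show thesis using that[of C "max T0 0"] by blast
qed

end

section \<open>Random sums\<close>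

lemma plus_one_powr_le_dyadic:
  fixes p :: real
  assumes p: "0 < p" "p \<le> 1" and k: "2^j \<le> k" "k < (2::nat)^Suc j"
  shows "(real k + 1) powr p \<le> 2 * 2 powr ((real j + 1) * p)"
proof -
  have k1: "real k \<ge> 1" using k(1) by (metis one_le_numeral one_le_power of_nat_le_iff of_nat_1 order_trans)
  have k2: "real k \<le> 2^Suc j" using k(2) by (metis less_imp_le of_nat_le_iff of_nat_numeral of_nat_power)
  have "(real k + 1) powr p \<le> (2 * real k) powr p" using k1 p by (intro powr_mono2) auto
  also have "\<dots> = 2 powr p * real k powr p" by (simp add: powr_mult)
  also have "\<dots> \<le> 2 * (2^Suc j) powr p"
  proof (rule mult_mono)
    show "(2::real) powr p \<le> 2" using powr_mono[of p 1 2] p by simp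
    show "real k powr p \<le> (2^Suc j) powr p" using k1 k2 p by (intro powr_mono2) auto
  qed auto
  also have "(2::real)^Suc j = 2 powr (real j + 1)" by (simp add: powr_add powr_realpow[symmetric])
  finally show ?thesis by (simp add: powr_powr)
qed

lemma powr_shift_le:
  fixes k x p r :: real
  assumes "k \<ge> 0" "x \<ge> 1" "0 \<le> p" "p \<le> 1" "r - 1 + p \<ge> 0"
  shows "(k + 1) * (k + x) powr (-r) \<le> x powr (-(r - 1 + p)) * (k + 1) powr p"
proof -
  have kx: "k + 1 \<le> k + x" "k + x > 0" using assms by auto
  have "(k + 1) * (k + x) powr (-r) = (k + 1) powr p * ((k + 1) powr (1-p) * (k + x) powr (-r))"
    using assms(1) by (simp add: powr_add[symmetric] mult.assoc[symmetric])
  also have "\<dots> \<le> (k + 1) powr p * ((k + x) powr (1-p) * (k + x) powr (-r))"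
    using kx assms by (intro mult_left_mono mult_right_mono powr_mono2) auto
  also have "(k + x) powr (1-p) * (k + x) powr (-r) = (k + x) powr (-(r - 1 + p))"
    by (simp add: powr_add[symmetric] algebra_simps)
  also have "\<dots> \<le> x powr (-(r - 1 + p))"
    using kx assms by (intro powr_mono2') auto
  finally show ?thesis using assms by (simp add: mult_left_mono mult.commute)
qed

lemma min_scaled_le:
  fixes m k x \<delta> :: real
  assumes "0 \<le> m" "0 \<le> k" "0 \<le> x" "0 \<le> \<delta>"
  shows "\<delta> * min m 1 * (k + x) \<le> \<delta> * (m * k + x)"
proof -
  have "min m 1 * k + min m 1 * x \<le> m * k + x"
    using assms by (intro add_mono mult_right_mono mult_left_le_one_le) auto
  then show ?thesis using assms(4) mult_left_mono by (fastforce simp: algebra_simps)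
qed

lemma (in prob_space) nn_integral_nat_rv:
  fixes N :: "'a \<Rightarrow> nat"
  assumes "N \<in> measurable M (count_space UNIV)"
  shows "(\<integral>\<^sup>+\<omega>. g (N \<omega>) \<partial>M) = (\<Sum>k. emeasure M {\<omega>\<in>space M. N \<omega> = k} * g k)"
proof -
  have "(\<integral>\<^sup>+\<omega>. g (N \<omega>) \<partial>M) = (\<integral>\<^sup>+\<omega>. (\<Sum>k. g k * indicator {\<omega>\<in>space M. N \<omega> = k} \<omega>) \<partial>M)"
  proof (rule nn_integral_cong)
    fix \<omega> assume "\<omega> \<in> space M"
    moreover have "(\<Sum>k. g k * indicator {\<omega>\<in>space M. N \<omega> = k} \<omega>)
        = (\<Sum>k\<in>{N \<omega>}. g k * indicator {\<omega>\<in>space M. N \<omega> = k} \<omega>)"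
      by (rule suminf_finite) auto
    ultimately show "g (N \<omega>) = (\<Sum>k. g k * indicator {\<omega>\<in>space M. N \<omega> = k} \<omega>)" by simp
  qed
  also have "\<dots> = (\<Sum>k. g k * emeasure M {\<omega>\<in>space M. N \<omega> = k})"
    using assms by (simp add: nn_integral_suminf nn_integral_cmult_indicator)
  finally show ?thesis by (simp add: mult.commute)
qed

lemma (in prob_space) prob_random_index_le:
  fixes N :: "'a \<Rightarrow> nat" and g :: "nat \<Rightarrow> real"
  assumes N: "N \<in> measurable M (count_space UNIV)" and A: "\<And>k. A k \<in> events"
    and indep: "\<And>k. prob ({\<omega>\<in>space M. N \<omega> = k} \<inter> A k) = prob {\<omega>\<in>space M. N \<omega> = k} * prob (A k)"
    and bound: "\<And>k. prob (A k) \<le> B * g k" and B: "B \<ge> 0"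
  shows "emeasure M {\<omega>\<in>space M. \<omega> \<in> A (N \<omega>)} \<le> ennreal B * (\<integral>\<^sup>+\<omega>. ennreal (g (N \<omega>)) \<partial>M)"
proof -
  define E where "E k = {\<omega>\<in>space M. N \<omega> = k}" for k
  have E: "E k \<in> events" for k unfolding E_def using N by measurable
  have "{\<omega>\<in>space M. \<omega> \<in> A (N \<omega>)} = (\<Union>k. E k \<inter> A k)" unfolding E_def by auto
  also have "emeasure M \<dots> = (\<Sum>k. emeasure M (E k \<inter> A k))"
    using A E by (intro suminf_emeasure[symmetric]) (auto simp: disjoint_family_on_def E_def)
  also have "\<dots> = (\<Sum>k. emeasure M (E k) * ennreal (prob (A k)))"
    using A E indep by (simp add: emeasure_eq_measure ennreal_mult E_def)
  also have "\<dots> \<le> (\<Sum>k. emeasure M (E k) * (ennreal B * ennreal (g k)))"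
  proof (intro suminf_le mult_left_mono)
    fix k
    show "ennreal (prob (A k)) \<le> ennreal B * ennreal (g k)"
      unfolding ennreal_mult'[OF B, symmetric] using bound[of k] by (rule ennreal_leI)
  qed (auto intro: summableI)
  also have "\<dots> = (\<Sum>k. ennreal B * (emeasure M (E k) * ennreal (g k)))"
    by (simp only: mult.left_commute)
  also have "\<dots> = ennreal B * (\<integral>\<^sup>+\<omega>. ennreal (g (N \<omega>)) \<partial>M)"
    unfolding ennreal_suminf_cmult nn_integral_nat_rv[OF N, of "\<lambda>k. ennreal (g k)"] E_def ..
  finally show ?thesis .
qed

lemma (in prob_space) nn_integral_plus_one_powr_le:
  fixes N :: "'a \<Rightarrow> nat"
  assumes N: "N \<in> measurable M (count_space UNIV)" and p: "0 < p" "p \<le> 1"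
  shows "(\<integral>\<^sup>+\<omega>. ennreal ((real (N \<omega>) + 1) powr p) \<partial>M)
    \<le> 1 + 2 * (\<Sum>j. ennreal (2 powr ((real j + 1) * p)) * emeasure M {\<omega>\<in>space M. real (N \<omega>) \<ge> 2^j})"
proof -
  define g where "g j = ennreal (2 powr ((real j + 1) * p))" for j :: nat
  define B where "B j = {\<omega>\<in>space M. real (N \<omega>) \<ge> 2^j}" for j :: nat
  have B: "B j \<in> events" for j unfolding B_def using N by measurable
  have "ennreal ((real (N \<omega>) + 1) powr p) \<le> 1 + 2 * (\<Sum>j. g j * indicator (B j) \<omega>)"
    if \<omega>: "\<omega> \<in> space M" for \<omega>
  proof (cases "N \<omega> = 0")
    case False
    then obtain j where j: "2^j \<le> N \<omega>" "N \<omega> < 2^Suc j" using ex_power_ivl1[of 2 "N \<omega>"] by auto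
    have "ennreal ((real (N \<omega>) + 1) powr p) \<le> ennreal (2 * 2 powr ((real j + 1) * p))"
      using plus_one_powr_le_dyadic[OF p j] by (rule ennreal_leI)
    also have "\<dots> = 2 * g j" unfolding g_def by (simp add: ennreal_mult)
    finally have le_g: "ennreal ((real (N \<omega>) + 1) powr p) \<le> 2 * g j" .
    have "(2::real)^j \<le> real (N \<omega>)"
      using j(1) by (metis of_nat_le_iff of_nat_numeral of_nat_power)
    then have "g j = g j * indicator (B j) \<omega>"
      using \<omega> unfolding B_def by simp
    also have "\<dots> \<le> (\<Sum>i<Suc j. g i * indicator (B i) \<omega>)"
      by (rule member_le_sum) auto
    also have "\<dots> \<le> (\<Sum>j. g j * indicator (B j) \<omega>)"
      by (rule sum_le_suminf) (auto intro: summableI)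
    finally have "2 * g j \<le> 2 * (\<Sum>j. g j * indicator (B j) \<omega>)" by (rule mult_left_mono) simp
    with le_g show ?thesis by (meson add_increasing order.trans zero_le)
  qed simp
  then have "(\<integral>\<^sup>+\<omega>. ennreal ((real (N \<omega>) + 1) powr p) \<partial>M) \<le> (\<integral>\<^sup>+\<omega>. 1 + 2 * (\<Sum>j. g j * indicator (B j) \<omega>) \<partial>M)"
    by (intro nn_integral_mono) auto
  also have "\<dots> = 1 + 2 * (\<Sum>j. g j * emeasure M (B j))"
    using B by (simp add: nn_integral_add nn_integral_cmult nn_integral_suminf nn_integral_cmult_indicator emeasure_space_1)
  finally show ?thesis unfolding g_def B_def .
qed

context rv_tail_space
begin

lemma tail_ratio_powr_bound:
  assumes U: "U \<in> borel_measurable M" and TU: "tail_ratio U c" and q: "0 \<le> q" "q < \<gamma>"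
  obtains D where "D \<ge> 0" "\<And>t. t \<ge> 1 \<Longrightarrow> prob {\<omega>\<in>space M. U \<omega> \<ge> t} \<le> D * t powr (-q)"
proof -
  obtain x0 where x0: "\<And>x. x \<ge> x0 \<Longrightarrow> prob {\<omega>\<in>space M. U \<omega> > x} \<le> (c + 1) * Fb x"
    using tail_ratio_eventually_le[OF TU] by blast
  obtain C1 x1 where C1: "C1 > 0" "\<And>x. x \<ge> x1 \<Longrightarrow> Fb x \<le> C1 * x powr (-q)"
    using potter_upper[OF q] by blast
  define X where "X = max (max x0 x1) 1"
  define D where "D = max (max (c + 1) 0 * C1 * 2 powr q) ((2*X) powr q)"
  have "prob {\<omega>\<in>space M. U \<omega> \<ge> t} \<le> D * t powr (-q)" if t: "t \<ge> 1" for t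
  proof (cases "t \<ge> 2*X")
    case True
    have tX: "t/2 \<ge> x0" "t/2 \<ge> x1" using True by (auto simp: X_def)
    have "prob {\<omega>\<in>space M. U \<omega> \<ge> t} \<le> prob {\<omega>\<in>space M. U \<omega> > t/2}"
      using U t by (intro finite_measure_mono) auto
    also have "\<dots> \<le> max (c + 1) 0 * Fb (t/2)"
      using x0[OF tX(1)] Fb_pos[of "t/2"] by (smt (verit) mult_right_mono)
    also have "\<dots> \<le> max (c + 1) 0 * (C1 * (t/2) powr (-q))" by (intro mult_left_mono C1(2)[OF tX(2)]) auto
    also have "\<dots> = max (c + 1) 0 * C1 * 2 powr q * t powr (-q)"
      using t by (simp add: powr_divide powr_minus divide_simps)
    also have "\<dots> \<le> D * t powr (-q)" unfolding D_def by (intro mult_right_mono) auto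
    finally show ?thesis .
  next
    case False
    have "t powr q \<le> (2*X) powr q" using False t q by (intro powr_mono2) auto
    then have "1 \<le> (2*X) powr q * t powr (-q)" using t by (simp add: powr_minus divide_simps)
    also have "\<dots> \<le> D * t powr (-q)" unfolding D_def by (intro mult_right_mono) auto
    finally show ?thesis by (meson order.trans prob_le_1)
  qed
  moreover have "D \<ge> 0" unfolding D_def by (auto simp: le_max_iff_disj)
  ultimately show thesis using that by blast
qed

lemma tail_ratio_moment_finite:
  fixes N :: "'a \<Rightarrow> nat"
  assumes N: "N \<in> measurable M (count_space UNIV)" and TN: "tail_ratio (\<lambda>\<omega>. real (N \<omega>)) c"
    and p: "0 < p" "p < \<gamma>" "p \<le> 1"
  shows "(\<integral>\<^sup>+\<omega>. ennreal ((real (N \<omega>) + 1) powr p) \<partial>M) < \<infinity>"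
proof -
  define q where "q = (p + \<gamma>)/2"
  have q: "0 \<le> q" "q < \<gamma>" "p < q" using p by (auto simp: q_def)
  have N_borel: "(\<lambda>\<omega>. real (N \<omega>)) \<in> borel_measurable M" using N by measurable
  obtain D where D: "D \<ge> 0" "\<And>t. t \<ge> 1 \<Longrightarrow> prob {\<omega>\<in>space M. real (N \<omega>) \<ge> t} \<le> D * t powr (-q)"
    using tail_ratio_powr_bound[OF N_borel TN q(1,2)] by blast
  have "(\<Sum>j. ennreal (2 powr ((real j + 1) * p)) * emeasure M {\<omega>\<in>space M. real (N \<omega>) \<ge> 2^j})
      \<le> (\<Sum>j. ennreal (2 powr p * D * (2 powr (p - q)) ^ j))"
  proof (intro suminf_le allI)
    fix j :: nat
    have "emeasure M {\<omega>\<in>space M. real (N \<omega>) \<ge> 2^j} \<le> ennreal (D * (2^j) powr (-q))"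
      using N_borel D(2)[of "2^j"] by (simp add: emeasure_eq_measure ennreal_leI)
    then have "ennreal (2 powr ((real j + 1) * p)) * emeasure M {\<omega>\<in>space M. real (N \<omega>) \<ge> 2^j}
        \<le> ennreal (2 powr ((real j + 1) * p) * (D * (2^j) powr (-q)))"
      using D(1) by (simp add: ennreal_mult mult_left_mono)
    also have "2 powr ((real j + 1) * p) * (D * (2^j) powr (-q)) = 2 powr p * D * (2 powr (p - q)) ^ j"
      by (simp add: powr_realpow[symmetric] powr_powr powr_add[symmetric] algebra_simps powr_diff powr_minus divide_simps)
    finally show "ennreal (2 powr ((real j + 1) * p)) * emeasure M {\<omega>\<in>space M. real (N \<omega>) \<ge> 2^j}
        \<le> ennreal (2 powr p * D * (2 powr (p - q)) ^ j)" .
  qed (auto intro: summableI)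
  also have "(\<Sum>j. ennreal (2 powr p * D * (2 powr (p - q)) ^ j)) < \<infinity>"
  proof -
    have "(2::real) powr (p - q) < 2 powr 0" using q by (intro powr_less_mono) auto
    then have "summable (\<lambda>j. 2 powr p * D * (2 powr (p - q)) ^ j)"
      by (intro summable_mult summable_geometric) auto
    then show ?thesis using D(1) by (simp add: ennreal_suminf_neq_top less_top)
  qed
  finally have "1 + 2 * (\<Sum>j. ennreal (2 powr ((real j + 1) * p)) * emeasure M {\<omega>\<in>space M. real (N \<omega>) \<ge> 2^j}) < \<infinity>"
    by (simp add: ennreal_mult_less_top less_top)
  with nn_integral_plus_one_powr_le[OF N p(1,3)] show ?thesis by (rule le_less_trans)
qed

end

locale random_sum_tail = rv_tail_space M Fb \<gamma> + nat_rv_moment M Y r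
  for M :: "'a measure" and Fb \<gamma> Y r +
  assumes exponent_gt_index: "r > \<gamma>"
begin

lemma random_sum_borel:
  fixes F :: "nat \<Rightarrow> 'a \<Rightarrow> nat" and N :: "'a \<Rightarrow> nat"
  assumes "\<And>i. i \<ge> 1 \<Longrightarrow> F i \<in> measurable M (count_space UNIV)" "N \<in> measurable M (count_space UNIV)"
  shows "(\<lambda>\<omega>. \<Sum>i=1..N \<omega>. real (F i \<omega>)) \<in> borel_measurable M"
proof -
  have "(\<lambda>\<omega>. \<Sum>i=1..k. real (F i \<omega>)) \<in> borel_measurable M" for k
    using assms(1) by (intro borel_measurable_sum) (auto intro: measurable_compose)
  from measurable_compose_countable[where f="\<lambda>k \<omega>. \<Sum>i=1..k. real (F i \<omega>)", OF this assms(2)]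
  show ?thesis by simp
qed

lemma partial_sum_deviation_bound:
  fixes F :: "'j \<Rightarrow> 'a \<Rightarrow> nat" and \<iota> :: "nat \<Rightarrow> 'j"
  assumes inj: "inj \<iota>"
    and indF: "\<And>k. indep_vars (\<lambda>_. count_space UNIV) F (\<iota> ` {1..k})"
    and distF: "\<And>i. i \<ge> 1 \<Longrightarrow> distr M (count_space UNIV) (F (\<iota> i)) = distr M (count_space UNIV) Y"
    and \<delta>: "\<delta> > 0"
  obtains C T0 where "C > 0" "\<And>x k. x \<ge> T0 \<Longrightarrow>
    prob {\<omega>\<in>space M. \<bar>(\<Sum>i=1..k. real (F (\<iota> i) \<omega>)) - real k * mean\<bar> > \<delta> * (real k + x)}
      \<le> C * ((real k + 1) * (real k + x) powr (-r))"
proof -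
  obtain C T0 where C: "C > 0" and CT: "\<And>(J::'j set) Z x. finite J \<Longrightarrow> indep_vars (\<lambda>_. count_space UNIV) Z J \<Longrightarrow>
     (\<And>j. j \<in> J \<Longrightarrow> distr M (count_space UNIV) (Z j) = distr M (count_space UNIV) Y) \<Longrightarrow> x \<ge> T0 \<Longrightarrow>
     prob {\<omega>\<in>space M. \<bar>(\<Sum>j\<in>J. real (Z j \<omega>)) - real (card J) * mean\<bar> > \<delta> * (real (card J) + x)}
       \<le> C * (real (card J) + 1) * (real (card J) + x) powr (-r)"
    using sum_deviation_bound[OF \<delta>] by blast
  have "prob {\<omega>\<in>space M. \<bar>(\<Sum>i=1..k. real (F (\<iota> i) \<omega>)) - real k * mean\<bar> > \<delta> * (real k + x)}
      \<le> C * ((real k + 1) * (real k + x) powr (-r))" if "x \<ge> T0" for x k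
  proof -
    have "(\<Sum>i=1..k. real (F (\<iota> i) \<omega>)) = (\<Sum>j\<in>\<iota> ` {1..k}. real (F j \<omega>))" for \<omega>
      using inj by (simp add: sum.reindex inj_on_subset[OF inj])
    moreover have "card (\<iota> ` {1..k}) = k" using inj by (simp add: card_image inj_on_subset[OF inj])
    moreover have "distr M (count_space UNIV) (F j) = distr M (count_space UNIV) Y" if "j \<in> \<iota> ` {1..k}" for j
      using distF that by auto
    ultimately show ?thesis using CT[OF _ indF _ that, of k] by (simp add: mult.assoc)
  qed
  with C that show thesis by blast
qed

(* (N+1)^p is integrable for p < gamma, and r - 1 + p > gamma is what is needed to sum the bound
   (k+1) (k+x)^-r <= x^-(r-1+p) (k+1)^p over the values k of N. *)
lemma random_index_moment:
  fixes N :: "'a \<Rightarrow> nat"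
  assumes N: "N \<in> measurable M (count_space UNIV)" and TN: "tail_ratio (\<lambda>\<omega>. real (N \<omega>)) c"
  obtains p Mom where "0 \<le> p" "p \<le> 1" "r - 1 + p > \<gamma>" "Mom \<ge> 0"
    "(\<integral>\<^sup>+\<omega>. ennreal ((real (N \<omega>) + 1) powr p) \<partial>M) = ennreal Mom"
proof -
  define p where "p = (if \<gamma> + 1 < r then 0 else (\<gamma> + 1 - r + min \<gamma> 1) / 2)"
  have p: "0 \<le> p" "p \<le> 1" "p = 0 \<or> p < \<gamma>" "r - 1 + p > \<gamma>"
    unfolding p_def using exponent_gt_1 exponent_gt_index index_nonneg by (auto simp: min_def field_simps)
  have "(\<integral>\<^sup>+\<omega>. ennreal ((real (N \<omega>) + 1) powr p) \<partial>M) < \<infinity>"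
  proof (cases "p = 0")
    case True
    then show ?thesis by (simp add: add_pos_nonneg emeasure_space_1)
  qed (use p in \<open>intro tail_ratio_moment_finite[OF N TN], auto\<close>)
  then obtain Mom where "(\<integral>\<^sup>+\<omega>. ennreal ((real (N \<omega>) + 1) powr p) \<partial>M) = ennreal Mom" "Mom \<ge> 0"
    using less_top_ennreal by auto
  with p that show thesis by blast
qed

lemma random_sum_deviation:
  fixes F :: "'j \<Rightarrow> 'a \<Rightarrow> nat" and \<iota> :: "nat \<Rightarrow> 'j" and N :: "'a \<Rightarrow> nat"
  assumes inj: "inj \<iota>"
    and indF: "\<And>k. indep_vars (\<lambda>_. count_space UNIV) F (\<iota> ` {1..k})"
    and distF: "\<And>i. i \<ge> 1 \<Longrightarrow> distr M (count_space UNIV) (F (\<iota> i)) = distr M (count_space UNIV) Y"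
    and N: "N \<in> measurable M (count_space UNIV)" and TN: "tail_ratio (\<lambda>\<omega>. real (N \<omega>)) c"
    and indN: "\<And>k B. B \<in> sets borel \<Longrightarrow>
        prob ({\<omega>\<in>space M. N \<omega> = k} \<inter> {\<omega>\<in>space M. (\<Sum>i=1..k. real (F (\<iota> i) \<omega>)) \<in> B})
        = prob {\<omega>\<in>space M. N \<omega> = k} * prob {\<omega>\<in>space M. (\<Sum>i=1..k. real (F (\<iota> i) \<omega>)) \<in> B}"
    and \<delta>: "\<delta> > 0"
  shows "((\<lambda>x. prob {\<omega>\<in>space M. \<bar>(\<Sum>i=1..N \<omega>. real (F (\<iota> i) \<omega>)) - real (N \<omega>) * mean\<bar>
      > \<delta> * (real (N \<omega>) + x)} / Fb x) \<longlongrightarrow> 0) at_top"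
proof -
  define S where "S k \<omega> = (\<Sum>i=1..k. real (F (\<iota> i) \<omega>))" for k \<omega>
  define A where "A x k = {\<omega>\<in>space M. \<bar>S k \<omega> - real k * mean\<bar> > \<delta> * (real k + x)}" for x k
  have F: "F (\<iota> i) \<in> measurable M (count_space UNIV)" if "i \<ge> 1" for i
    using indF[of i] that by (auto simp: indep_vars_def)
  have S: "(\<lambda>\<omega>. S k \<omega>) \<in> borel_measurable M" for k
    unfolding S_def using measurable_compose[OF F, of _ real borel] by (intro borel_measurable_sum) auto
  have A: "A x k \<in> events" for x k unfolding A_def using S by measurable
  have indep_A: "prob ({\<omega>\<in>space M. N \<omega> = k} \<inter> A x k) = prob {\<omega>\<in>space M. N \<omega> = k} * prob (A x k)" for x k
  proof -
    have "{z. \<bar>z - real k * mean\<bar> > \<delta> * (real k + x)} \<in> sets borel" by measurable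
    from indN[OF this, of k] show ?thesis unfolding A_def S_def by simp
  qed
  obtain C T0 where C: "C > 0" and prob_A: "\<And>x k. x \<ge> T0 \<Longrightarrow> prob (A x k) \<le> C * ((real k + 1) * (real k + x) powr (-r))"
    using partial_sum_deviation_bound[OF inj indF distF \<delta>] unfolding A_def S_def by blast
  obtain p Mom where p: "0 \<le> p" "p \<le> 1" "r - 1 + p > \<gamma>" and Mom: "Mom \<ge> 0"
      "(\<integral>\<^sup>+\<omega>. ennreal ((real (N \<omega>) + 1) powr p) \<partial>M) = ennreal Mom"
    using random_index_moment[OF N TN] by blast
  define pw where "pw = r - 1 + p"
  have pw: "pw > \<gamma>" using p unfolding pw_def by simp
  have bound: "prob {\<omega>\<in>space M. \<omega> \<in> A x (N \<omega>)} \<le> C * Mom * x powr (-pw)" if x: "x \<ge> max T0 1" for x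
  proof -
    have "prob (A x k) \<le> C * x powr (-pw) * (real k + 1) powr p" for k
    proof -
      have "(real k + 1) * (real k + x) powr (-r) \<le> x powr (-pw) * (real k + 1) powr p"
        unfolding pw_def using x p exponent_gt_1 by (intro powr_shift_le) auto
      then show ?thesis using prob_A[of x k] x C by (smt (verit) mult_left_mono mult.assoc)
    qed
    then have "emeasure M {\<omega>\<in>space M. \<omega> \<in> A x (N \<omega>)} \<le> ennreal (C * x powr (-pw)) * ennreal Mom"
      using A C indep_A unfolding Mom(2)[symmetric] by (intro prob_random_index_le[OF N]) auto
    then show ?thesis using C Mom(1) by (simp add: emeasure_eq_measure ennreal_mult'[symmetric] mult_ac)
  qed
  show ?thesis
  proof (rule tendsto_sandwich[OF _ _ tendsto_const])
    show "eventually (\<lambda>x. prob {\<omega>\<in>space M. \<bar>(\<Sum>i=1..N \<omega>. real (F (\<iota> i) \<omega>)) - real (N \<omega>) * mean\<bar>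
        > \<delta> * (real (N \<omega>) + x)} / Fb x \<le> C * Mom * (x powr (-pw) / Fb x)) at_top"
      using eventually_ge_at_top[of "max T0 1"]
    proof eventually_elim
      case (elim x)
      from divide_Fb_mono[OF bound[OF elim]] show ?case by (simp add: A_def S_def)
    qed
    have "((\<lambda>x. C * Mom * (x powr (-pw) / Fb x)) \<longlongrightarrow> C * Mom * 0) at_top"
      by (intro tendsto_mult tendsto_const powr_div_Fb_tendsto_0 pw)
    then show "((\<lambda>x. C * Mom * (x powr (-pw) / Fb x)) \<longlongrightarrow> 0) at_top" by simp
  qed (use Fb_pos in \<open>auto intro!: always_eventually divide_nonneg_pos\<close>)
qed

lemma random_sum_relative_deviation:
  fixes F :: "'j \<Rightarrow> 'a \<Rightarrow> nat" and \<iota> :: "nat \<Rightarrow> 'j" and N :: "'a \<Rightarrow> nat"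
  assumes inj: "inj \<iota>"
    and indF: "\<And>k. indep_vars (\<lambda>_. count_space UNIV) F (\<iota> ` {1..k})"
    and distF: "\<And>i. i \<ge> 1 \<Longrightarrow> distr M (count_space UNIV) (F (\<iota> i)) = distr M (count_space UNIV) Y"
    and N: "N \<in> measurable M (count_space UNIV)" and TN: "tail_ratio (\<lambda>\<omega>. real (N \<omega>)) c"
    and indN: "\<And>k B. B \<in> sets borel \<Longrightarrow>
        prob ({\<omega>\<in>space M. N \<omega> = k} \<inter> {\<omega>\<in>space M. (\<Sum>i=1..k. real (F (\<iota> i) \<omega>)) \<in> B})
        = prob {\<omega>\<in>space M. N \<omega> = k} * prob {\<omega>\<in>space M. (\<Sum>i=1..k. real (F (\<iota> i) \<omega>)) \<in> B}"
    and \<delta>: "\<delta> > 0"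
  shows "((\<lambda>x. prob {\<omega>\<in>space M. \<bar>(\<Sum>i=1..N \<omega>. real (F (\<iota> i) \<omega>)) - real (N \<omega>) * mean\<bar>
      > \<delta> * (mean * real (N \<omega>) + x)} / Fb x) \<longlongrightarrow> 0) at_top"
proof -
  let ?D = "\<lambda>\<omega>. \<bar>(\<Sum>i=1..N \<omega>. real (F (\<iota> i) \<omega>)) - real (N \<omega>) * mean\<bar>"
  have F: "F (\<iota> i) \<in> measurable M (count_space UNIV)" if "i \<ge> 1" for i
    using indF[of i] that by (auto simp: indep_vars_def)
  show ?thesis
  proof (cases "mean > 0")
    case True
    define \<delta>' where "\<delta>' = \<delta> * min mean 1"
    have \<delta>': "\<delta>' > 0" unfolding \<delta>'_def using True \<delta> by simp
    have D: "?D \<in> borel_measurable M"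
      using random_sum_borel[of "\<lambda>i. F (\<iota> i)", OF F N] N by measurable
    show ?thesis
    proof (rule tendsto_sandwich[OF _ _ tendsto_const random_sum_deviation[OF inj indF distF N TN indN \<delta>']])
      show "eventually (\<lambda>x. prob {\<omega>\<in>space M. ?D \<omega> > \<delta> * (mean * real (N \<omega>) + x)} / Fb x
          \<le> prob {\<omega>\<in>space M. ?D \<omega> > \<delta>' * (real (N \<omega>) + x)} / Fb x) at_top"
        using eventually_ge_at_top[of 0]
      proof eventually_elim
        case (elim x)
        have "\<delta>' * (real k + x) \<le> \<delta> * (mean * real k + x)" for k
          unfolding \<delta>'_def using min_scaled_le[OF mean_nonneg _ elim, of "real k" \<delta>] \<delta> by simp
        then have "prob {\<omega>\<in>space M. ?D \<omega> > \<delta> * (mean * real (N \<omega>) + x)}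
            \<le> prob {\<omega>\<in>space M. ?D \<omega> > \<delta>' * (real (N \<omega>) + x)}"
          using D N by (intro finite_measure_mono) (auto intro: le_less_trans)
        then show ?case by (rule divide_Fb_mono)
      qed
    qed (use Fb_pos in \<open>auto intro!: always_eventually divide_nonneg_pos\<close>)
  next
    case False
    then have mean: "mean = 0" using mean_nonneg by simp
    have "AE \<omega> in M. F (\<iota> i) \<omega> = 0" if "i \<ge> 1" for i
      using AE_zero_of_mean_zero[OF mean distF[OF that] F[OF that]] .
    then have AE_F: "AE \<omega> in M. \<forall>i\<ge>1. F (\<iota> i) \<omega> = 0"
      by (subst AE_all_countable) (auto intro: AE_mp)
    have "eventually (\<lambda>x. prob {\<omega>\<in>space M. ?D \<omega> > \<delta> * (mean * real (N \<omega>) + x)} / Fb x = 0) at_top"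
      using eventually_gt_at_top[of 0]
    proof eventually_elim
      case (elim x)
      have "AE \<omega> in M. \<not> ?D \<omega> > \<delta> * (mean * real (N \<omega>) + x)"
        using AE_F by eventually_elim (use \<delta> elim mean in \<open>simp add: not_less\<close>)
      then show ?case by (simp add: measure_def emeasure_eq_0_AE)
    qed
    then show ?thesis by (rule tendsto_eventually)
  qed
qed

end

section \<open>The process as a function of its primitive variables\<close>

lemma measurable_nat_add:
  assumes "f \<in> measurable N (count_space UNIV)" "g \<in> measurable N (count_space UNIV)"
  shows "(\<lambda>x. f x + g x :: nat) \<in> measurable N (count_space UNIV)"
  using measurable_compose_countable[where f="\<lambda>u x. u + g x", OF measurable_compose[OF assms(2)] assms(1)]
  by simp

lemma measurable_nat_random_sum:
  fixes K :: "'a \<Rightarrow> nat" and c :: "nat \<Rightarrow> 'a \<Rightarrow> nat"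
  assumes K: "K \<in> measurable N (count_space UNIV)"
    and c: "\<And>i. i \<ge> 1 \<Longrightarrow> c i \<in> measurable N (count_space UNIV)"
  shows "(\<lambda>x. \<Sum>i=1..K x. c i x) \<in> measurable N (count_space UNIV)"
proof -
  have "(\<lambda>x. \<Sum>i\<in>{1..k}. c i x) \<in> measurable N (count_space UNIV)" for k
  proof (induction k)
    case (Suc k)
    then show ?case by (simp add: measurable_nat_add c)
  qed simp
  from measurable_compose_countable[where f="\<lambda>k x. \<Sum>i=1..k. c i x", OF this K] show ?thesis by simp
qed

lemma (in prob_space) indep_var_restrict_compose:
  fixes F :: "'i \<Rightarrow> 'a \<Rightarrow> 'b"
  assumes "indep_vars (\<lambda>_. count_space UNIV) F I" "A \<inter> B = {}" "A \<subseteq> I" "B \<subseteq> I"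
    and "g \<in> measurable (PiM A (\<lambda>_. count_space UNIV)) N1"
    and "h \<in> measurable (PiM B (\<lambda>_. count_space UNIV)) N2"
  shows "indep_var N1 (\<lambda>\<omega>. g (restrict (\<lambda>i. F i \<omega>) A)) N2 (\<lambda>\<omega>. h (restrict (\<lambda>i. F i \<omega>) B))"
  using indep_var_compose[OF indep_var_restrict[OF assms(1-4)] assms(5,6)] by (simp add: comp_def)

lemma (in prob_space) indep_var_cong:
  assumes "\<And>\<omega>. \<omega> \<in> space M \<Longrightarrow> U \<omega> = U' \<omega>" "\<And>\<omega>. \<omega> \<in> space M \<Longrightarrow> V \<omega> = V' \<omega>"
  shows "indep_var N1 U N2 V \<longleftrightarrow> indep_var N1 U' N2 V'"
proof -
  have "case_bool U V b -` A \<inter> space M = case_bool U' V' b -` A \<inter> space M" for b A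
    using assms by (cases b) auto
  moreover have "case_bool U V b \<in> measurable M (case_bool N1 N2 b) \<longleftrightarrow> case_bool U' V' b \<in> measurable M (case_bool N1 N2 b)" for b
    using assms by (cases b) (auto cong: measurable_cong)
  ultimately show ?thesis unfolding indep_var_def indep_vars_def by simp
qed


(* Since gwi_state n only reads the coordinates in gwi_past n, X_n and X_(n-1) are independent of the
   offspring and immigration variables of later generations. *)
fun gwi_state :: "nat \<Rightarrow> (gwi_idx \<Rightarrow> nat) \<Rightarrow> nat \<times> nat" where
  "gwi_state 0 f = (f IX0, f IXm1)"
| "gwi_state (Suc n) f = ((\<Sum>i=1..fst (gwi_state n f). f (IXi (Suc n) i))
      + (\<Sum>j=1..snd (gwi_state n f). f (IEta (Suc n) j)) + f (IEps (Suc n)), fst (gwi_state n f))"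

definition gwi_past :: "nat \<Rightarrow> gwi_idx set" where
  "gwi_past n = {IXm1, IX0} \<union> {IXi k i | k i. 1 \<le> k \<and> k \<le> n \<and> 1 \<le> i}
     \<union> {IEta k j | k j. 1 \<le> k \<and> k \<le> n \<and> 1 \<le> j} \<union> {IEps k | k. 1 \<le> k \<and> k \<le> n}"

lemma gwi_past_mono: "gwi_past n \<subseteq> gwi_past (Suc n)"
  unfolding gwi_past_def by auto

lemma gwi_past_subset: "gwi_past n \<subseteq> gwi_index_set"
  unfolding gwi_past_def gwi_index_set_def by auto

lemma gwi_state_cong: "(\<And>i. i \<in> gwi_past n \<Longrightarrow> f i = g i) \<Longrightarrow> gwi_state n f = gwi_state n g"
proof (induction n)
  case (Suc n)
  then have IH: "gwi_state n f = gwi_state n g" using gwi_past_mono by blast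
  have "f i = g i" if "i \<in> {IXi (Suc n) k | k. 1 \<le> k} \<union> {IEta (Suc n) k | k. 1 \<le> k} \<union> {IEps (Suc n)}" for i
    using that by (intro Suc.prems) (auto simp: gwi_past_def)
  then show ?case unfolding gwi_state.simps IH by (auto intro!: sum.cong)
qed (simp add: gwi_past_def)

lemma gwi_state_restrict: "gwi_past n \<subseteq> A \<Longrightarrow> gwi_state n (restrict f A) = gwi_state n f"
  by (intro gwi_state_cong) auto

lemma gwi_state_measurable:
  assumes "gwi_past n \<subseteq> A"
  shows "(\<lambda>f. fst (gwi_state n f)) \<in> measurable (PiM A (\<lambda>_. count_space UNIV)) (count_space UNIV)
       \<and> (\<lambda>f. snd (gwi_state n f)) \<in> measurable (PiM A (\<lambda>_. count_space UNIV)) (count_space UNIV)"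
  using assms
proof (induction n)
  case 0
  then have "IX0 \<in> A" "IXm1 \<in> A" by (auto simp: gwi_past_def)
  then show ?case by simp
next
  case (Suc n)
  have component: "(\<lambda>f. f i) \<in> measurable (PiM A (\<lambda>_. count_space UNIV)) (count_space UNIV)"
    if "i \<in> gwi_past (Suc n)" for i
    using Suc.prems that by (intro measurable_component_singleton) auto
  have "gwi_past n \<subseteq> A" using Suc.prems gwi_past_mono by blast
  note IH = Suc.IH[OF this]
  have "(\<lambda>f. (\<Sum>i=1..fst (gwi_state n f). f (IXi (Suc n) i)) + (\<Sum>j=1..snd (gwi_state n f). f (IEta (Suc n) j))
      + f (IEps (Suc n))) \<in> measurable (PiM A (\<lambda>_. count_space UNIV)) (count_space UNIV)"
    by (intro measurable_nat_add measurable_nat_random_sum IH[THEN conjunct1] IH[THEN conjunct2] component)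
      (auto simp: gwi_past_def)
  then show ?case using IH by simp
qed

locale gwi = prob_space M for M :: "'a measure" +
  fixes X :: "int \<Rightarrow> 'a \<Rightarrow> nat" and xi eta :: "nat \<Rightarrow> nat \<Rightarrow> 'a \<Rightarrow> nat" and eps :: "nat \<Rightarrow> 'a \<Rightarrow> nat"
  assumes gwi: "second_order_GWI X xi eta eps"
begin

abbreviation family :: "gwi_idx \<Rightarrow> 'a \<Rightarrow> nat" where "family \<equiv> gwi_family X xi eta eps"

lemma family_indep: "indep_vars (\<lambda>_. count_space UNIV) family gwi_index_set"
  using gwi unfolding second_order_GWI_def by blast

lemma family_measurable: "i \<in> gwi_index_set \<Longrightarrow> family i \<in> measurable M (count_space UNIV)"
  using family_indep by (auto simp: indep_vars_def)

lemma xi_measurable: "n \<ge> 1 \<Longrightarrow> i \<ge> 1 \<Longrightarrow> xi n i \<in> measurable M (count_space UNIV)"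
  using family_measurable[of "IXi n i"] by (auto simp: gwi_index_set_def)

lemma eta_measurable: "n \<ge> 1 \<Longrightarrow> j \<ge> 1 \<Longrightarrow> eta n j \<in> measurable M (count_space UNIV)"
  using family_measurable[of "IEta n j"] by (auto simp: gwi_index_set_def)

lemma eps_measurable: "n \<ge> 1 \<Longrightarrow> eps n \<in> measurable M (count_space UNIV)"
  using family_measurable[of "IEps n"] by (auto simp: gwi_index_set_def)

lemma xi_distr: "n \<ge> 1 \<Longrightarrow> i \<ge> 1 \<Longrightarrow> distr M (count_space UNIV) (xi n i) = distr M (count_space UNIV) (xi 1 1)"
  using gwi unfolding second_order_GWI_def by blast

lemma eta_distr: "n \<ge> 1 \<Longrightarrow> j \<ge> 1 \<Longrightarrow> distr M (count_space UNIV) (eta n j) = distr M (count_space UNIV) (eta 1 1)"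
  using gwi unfolding second_order_GWI_def by blast

lemma eps_distr: "n \<ge> 1 \<Longrightarrow> distr M (count_space UNIV) (eps n) = distr M (count_space UNIV) (eps 1)"
  using gwi unfolding second_order_GWI_def by blast

lemma X_Suc:
  assumes "\<omega> \<in> space M"
  shows "X (int (Suc n)) \<omega> = (\<Sum>i=1..X (int n) \<omega>. xi (Suc n) i \<omega>)
    + (\<Sum>j=1..X (int n - 1) \<omega>. eta (Suc n) j \<omega>) + eps (Suc n) \<omega>"
proof -
  have "int (Suc n) - 1 = int n" "int (Suc n) - 2 = int n - 1" by auto
  with gwi assms show ?thesis unfolding second_order_GWI_def by (metis le_add1 plus_1_eq_Suc)
qed

lemma gwi_state_family:
  "\<omega> \<in> space M \<Longrightarrow> gwi_state n (\<lambda>i. family i \<omega>) = (X (int n) \<omega>, X (int n - 1) \<omega>)"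
proof (induction n)
  case (Suc n)
  then show ?case using X_Suc[OF Suc.prems, of n] by simp
qed simp

lemma restrict_family_measurable:
  "A \<subseteq> gwi_index_set \<Longrightarrow> (\<lambda>\<omega>. restrict (\<lambda>i. family i \<omega>) A) \<in> measurable M (PiM A (\<lambda>_. count_space UNIV))"
  by (intro measurable_restrict family_measurable) auto

lemma X_measurable:
  "X (int n) \<in> measurable M (count_space UNIV)" "X (int n - 1) \<in> measurable M (count_space UNIV)"
proof -
  let ?R = "\<lambda>\<omega>. restrict (\<lambda>i. family i \<omega>) (gwi_past n)"
  have "(\<lambda>\<omega>. fst (gwi_state n (?R \<omega>))) \<in> measurable M (count_space UNIV)"
       "(\<lambda>\<omega>. snd (gwi_state n (?R \<omega>))) \<in> measurable M (count_space UNIV)"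
    using gwi_state_measurable[of n "gwi_past n"]
    by (auto intro!: measurable_compose[OF restrict_family_measurable[OF gwi_past_subset]])
  moreover have "gwi_state n (?R \<omega>) = (X (int n) \<omega>, X (int n - 1) \<omega>)" if "\<omega> \<in> space M" for \<omega>
    using gwi_state_family[OF that] gwi_state_restrict[of n "gwi_past n"] by simp
  ultimately show "X (int n) \<in> measurable M (count_space UNIV)" "X (int n - 1) \<in> measurable M (count_space UNIV)"
    by (auto cong: measurable_cong)
qed

lemma X_borel [measurable]:
  "(\<lambda>\<omega>. real (X (int n) \<omega>)) \<in> borel_measurable M" "(\<lambda>\<omega>. real (X (int n - 1) \<omega>)) \<in> borel_measurable M"
  using X_measurable[of n] by (auto intro: measurable_compose)

end

section \<open>Tail asymptotics of the process\<close>

lemma lam_plus_minus_root: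
  fixes mx me :: real
  assumes "mx^2 + 4*me \<ge> 0" "z = lam_plus mx me \<or> z = lam_minus mx me"
  shows "z^2 = mx * z + me"
proof -
  define D where "D = sqrt (mx^2 + 4*me)"
  have DD: "D^2 = mx^2 + 4*me" unfolding D_def using assms(1) by simp
  have "((mx + D)/2)^2 = mx * ((mx + D)/2) + me" "((mx - D)/2)^2 = mx * ((mx - D)/2) + me"
    using DD by (simp_all add: power2_eq_square field_simps)
  moreover have "z = (mx + D)/2 \<or> z = (mx - D)/2"
    using assms(2) unfolding D_def lam_plus_def lam_minus_def .
  ultimately show ?thesis by metis
qed

lemma mseq_closed_form:
  assumes "mx^2 + 4*me > 0"
  shows "mseq mx me k = (lam_plus mx me ^ Suc k - lam_minus mx me ^ Suc k) / (lam_plus mx me - lam_minus mx me)"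
proof -
  have "lam_plus mx me - lam_minus mx me \<noteq> 0"
    using assms unfolding lam_plus_def lam_minus_def by simp
  then show ?thesis unfolding mseq_def by simp
qed

lemma mseq_1:
  assumes "mx^2 + 4*me > 0"
  shows "mseq mx me 1 = mx"
proof -
  define lp where "lp = lam_plus mx me"
  define lm where "lm = lam_minus mx me"
  have "lp \<noteq> lm" "lp + lm = mx"
    using assms unfolding lp_def lm_def lam_plus_def lam_minus_def by (auto simp: field_simps)
  moreover have "lp^2 - lm^2 = (lp - lm) * (lp + lm)" by (simp add: power2_eq_square algebra_simps)
  ultimately show ?thesis
    using mseq_closed_form[OF assms, of 1] unfolding lp_def[symmetric] lm_def[symmetric]
    by (simp add: numeral_2_eq_2[symmetric])
qed

lemma mseq_Suc_Suc:
  assumes "mx^2 + 4*me > 0"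
  shows "mseq mx me (Suc (Suc k)) = mx * mseq mx me (Suc k) + me * mseq mx me k"
proof -
  define lp where "lp = lam_plus mx me"
  define lm where "lm = lam_minus mx me"
  have "z^(k+3) = mx * z^(k+2) + me * z^(k+1)" if "z = lp \<or> z = lm" for z
  proof -
    have "z^(k+3) = z^(k+1) * z^2" by (simp add: numeral_3_eq_3 power2_eq_square mult_ac)
    also have "\<dots> = mx * (z^(k+1) * z) + me * z^(k+1)"
      using lam_plus_minus_root[of mx me z] assms that unfolding lp_def lm_def by (simp add: algebra_simps)
    finally show ?thesis by (simp add: numeral_2_eq_2 mult_ac)
  qed
  then have "lp^(k+3) - lm^(k+3) = mx * (lp^(k+2) - lm^(k+2)) + me * (lp^(k+1) - lm^(k+1))"
    by (simp add: algebra_simps)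
  then have "(lp^(k+3) - lm^(k+3)) / (lp - lm)
      = mx * ((lp^(k+2) - lm^(k+2)) / (lp - lm)) + me * ((lp^(k+1) - lm^(k+1)) / (lp - lm))"
    by (simp add: add_divide_distrib)
  then show ?thesis
    unfolding mseq_closed_form[OF assms] lp_def[symmetric] lm_def[symmetric]
    by (simp add: numeral_3_eq_3 numeral_2_eq_2)
qed

lemma offspring_error_le:
  fixes s1 s2 u v mx me a b d x \<delta> :: real
  assumes "a > 0" "b \<ge> 0" "u \<ge> 0" "v \<ge> 0" "mx \<ge> 0" "me \<ge> 0" "x \<ge> 0"
    and d: "0 < d" "d \<le> \<delta>" "2 * a * d \<le> \<delta>"
    and s1: "\<bar>s1 - u * mx\<bar> \<le> d * (mx * u + x)" and s2: "\<bar>s2 - v * me\<bar> \<le> d * (me * v + x)"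
  shows "\<bar>a * (s1 + s2) + b * u - ((a * mx + b) * u + a * me * v)\<bar>
    \<le> \<delta> * ((a * mx + b) * u + a * me * v + x)"
proof -
  have "a * (s1 + s2) + b * u - ((a * mx + b) * u + a * me * v) = a * (s1 - u * mx) + a * (s2 - v * me)"
    by (simp add: algebra_simps)
  then have "\<bar>a * (s1 + s2) + b * u - ((a * mx + b) * u + a * me * v)\<bar> \<le> \<bar>a * (s1 - u * mx)\<bar> + \<bar>a * (s2 - v * me)\<bar>"
    by (metis abs_triangle_ineq)
  also have "\<dots> = a * \<bar>s1 - u * mx\<bar> + a * \<bar>s2 - v * me\<bar>"
    using assms(1) by (simp add: abs_mult)
  also have "\<dots> \<le> a * (d * (mx * u + x)) + a * (d * (me * v + x))"
    using s1 s2 assms(1) by (intro add_mono mult_left_mono) auto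
  also have "\<dots> = d * (a * mx * u + a * me * v) + (2 * a * d) * x" by (simp add: algebra_simps)
  also have "\<dots> \<le> \<delta> * ((a * mx + b) * u + a * me * v) + \<delta> * x"
  proof (rule add_mono)
    have "0 \<le> a * mx * u + a * me * v" "a * mx * u + a * me * v \<le> (a * mx + b) * u + a * me * v"
      using assms by (simp_all add: algebra_simps)
    then show "d * (a * mx * u + a * me * v) \<le> \<delta> * ((a * mx + b) * u + a * me * v)"
      using d by (meson mult_mono less_imp_le order.trans)
    show "(2 * a * d) * x \<le> \<delta> * x" using d assms(7) by (intro mult_right_mono)
  qed
  finally show ?thesis by (simp add: algebra_simps)
qed


locale gwi_regvar = gwi M X xi eta eps for M :: "'a measure" and X xi eta eps +
  fixes \<gamma> r :: real
  assumes gamma_nonneg: "\<gamma> \<ge> 0"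
    and eps_regvar: "regularly_varying (\<lambda>\<omega>. real (eps 1 \<omega>)) \<gamma>"
    and moment_exponent: "r > max 1 \<gamma>"
    and xi_moment: "integrable M (\<lambda>\<omega>. real (xi 1 1 \<omega>) powr r)"
    and eta_moment: "integrable M (\<lambda>\<omega>. real (eta 1 1 \<omega>) powr r)"
    and X0_moment: "integrable M (\<lambda>\<omega>. real (X 0 \<omega>) powr r)"
    and Xm1_moment: "integrable M (\<lambda>\<omega>. real (X (-1) \<omega>) powr r)"
    and offspring_nondegenerate: "prob {\<omega>\<in>space M. xi 1 1 \<omega> = 0} < 1 \<or> prob {\<omega>\<in>space M. eta 1 1 \<omega> = 0} < 1"
begin

definition Fb :: "real \<Rightarrow> real" where "Fb x = prob {\<omega>\<in>space M. real (eps 1 \<omega>) > x}"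

lemma eps_borel [measurable]: "(\<lambda>\<omega>. real (eps n \<omega>)) \<in> borel_measurable M" if "n \<ge> 1"
  using eps_measurable[OF that] by (intro measurable_compose[OF eps_measurable[OF that]]) auto

lemma eps_tail_antimono: "x \<le> y \<Longrightarrow> Fb y \<le> Fb x"
  unfolding Fb_def by (intro finite_measure_mono) auto

lemma eps_tail_regvar: "q > 0 \<Longrightarrow> ((\<lambda>x. Fb (q*x) / Fb x) \<longlongrightarrow> q powr (-\<gamma>)) at_top"
  using eps_regvar unfolding regularly_varying_def Fb_def by auto

lemma eps_tail_pos: "Fb x > 0"
proof (rule ccontr)
  assume "\<not> Fb x > 0"
  then have zero: "Fb y = 0" if "y \<ge> x" for y
    using eps_tail_antimono[OF that] measure_nonneg[of M] unfolding Fb_def by (metis antisym not_less)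
  have "eventually (\<lambda>y. Fb (2*y) / Fb y = 0) at_top"
    using eventually_ge_at_top[of "max x 0"] by eventually_elim (simp add: zero)
  then have "((\<lambda>y. Fb (2*y) / Fb y) \<longlongrightarrow> 0) at_top" by (rule tendsto_eventually)
  with tendsto_unique[OF trivial_limit_at_top_linorder eps_tail_regvar[of 2]]
  have "2 powr (-\<gamma>) = (0::real)" by simp
  then show False by simp
qed

lemma eps_tail_tendsto_0: "(Fb \<longlongrightarrow> 0) at_top"
proof -
  define A where "A n = {\<omega>\<in>space M. real (eps 1 \<omega>) > real n}" for n :: nat
  have "A n \<in> events" for n unfolding A_def using eps_borel[of 1] by measurable
  then have "range A \<subseteq> events" by auto
  moreover have "antimono_on UNIV A" unfolding A_def by (auto simp: monotone_on_def)
  moreover have "\<Inter> (range A) = {}" unfolding A_def by (auto dest: spec[of _ "eps 1 _"])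
  ultimately have "(\<lambda>n. Fb (real n)) \<longlonglongrightarrow> 0"
    using finite_Lim_measure_decseq[of A] unfolding A_def Fb_def by simp
  from filterlim_compose[OF this filterlim_compose[OF filterlim_nat_sequentially filterlim_floor_sequentially]]
  have floor: "((\<lambda>x. Fb (real (nat \<lfloor>x\<rfloor>))) \<longlongrightarrow> 0) at_top" by (simp add: comp_def)
  show ?thesis
  proof (rule tendsto_sandwich[OF _ _ tendsto_const floor])
    show "eventually (\<lambda>x. 0 \<le> Fb x) at_top" using eps_tail_pos by (intro always_eventually allI less_imp_le)
    show "eventually (\<lambda>x. Fb x \<le> Fb (real (nat \<lfloor>x\<rfloor>))) at_top"
      using eventually_ge_at_top[of 0] by eventually_elim (auto intro!: eps_tail_antimono)
  qed
qed

sublocale rv_tail_space M Fb \<gamma>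
  by unfold_locales (fact eps_tail_pos eps_tail_antimono eps_tail_regvar eps_tail_tendsto_0 gamma_nonneg)+

lemma xi_random_sum_tail: "random_sum_tail M Fb \<gamma> (xi 1 1) r"
  by unfold_locales (use moment_exponent xi_measurable[of 1 1] xi_moment in auto)

lemma eta_random_sum_tail: "random_sum_tail M Fb \<gamma> (eta 1 1) r"
  by unfold_locales (use moment_exponent eta_measurable[of 1 1] eta_moment in auto)

sublocale xi_sum: random_sum_tail M Fb \<gamma> "xi 1 1" r
  by (rule xi_random_sum_tail)

sublocale eta_sum: random_sum_tail M Fb \<gamma> "eta 1 1" r
  by (rule eta_random_sum_tail)

(* The non-degeneracy of xi or eta is used only here: it makes lam_plus differ from lam_minus, so that
   mseq satisfies the recurrence m_(k+2) = m_xi m_(k+1) + m_eta m_k. *)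
lemma mean_discriminant_pos: "xi_sum.mean^2 + 4 * eta_sum.mean > 0"
proof (rule ccontr)
  assume "\<not> ?thesis"
  moreover have "xi_sum.mean^2 \<ge> 0" by simp
  ultimately have "eta_sum.mean = 0" "xi_sum.mean^2 = 0"
    using eta_sum.mean_nonneg by linarith+
  then have "xi_sum.mean = 0" "eta_sum.mean = 0" by simp_all
  then have "AE \<omega> in M. real (xi 1 1 \<omega>) = 0" "AE \<omega> in M. real (eta 1 1 \<omega>) = 0"
    using integral_nonneg_eq_0_iff_AE[OF xi_sum.integrable_Y] integral_nonneg_eq_0_iff_AE[OF eta_sum.integrable_Y]
    unfolding xi_sum.mean_def eta_sum.mean_def by auto
  then have "prob {\<omega>\<in>space M. xi 1 1 \<omega> = 0} = 1" "prob {\<omega>\<in>space M. eta 1 1 \<omega> = 0} = 1"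
    using xi_measurable[of 1 1] eta_measurable[of 1 1] by (simp_all add: prob_Collect_eq_1)
  then show False using offspring_nondegenerate by simp
qed

definition m_seq :: "nat \<Rightarrow> real" where "m_seq k = mseq xi_sum.mean eta_sum.mean k"

definition m_prev :: "nat \<Rightarrow> real" where "m_prev k = (if k = 0 then 0 else m_seq (k - 1))"

definition tail_coef :: "nat \<Rightarrow> real \<Rightarrow> real \<Rightarrow> real" where
  "tail_coef n a b = (\<Sum>i=1..n. (a * m_seq (n - i) + b * m_prev (n - i)) powr \<gamma>)"

definition lin_comb :: "nat \<Rightarrow> real \<Rightarrow> real \<Rightarrow> 'a \<Rightarrow> real" where
  "lin_comb n a b \<omega> = a * real (X (int n) \<omega>) + b * real (X (int n - 1) \<omega>)"

lemma m_seq_0: "m_seq 0 = 1"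
  by (simp add: m_seq_def mseq_def)

lemma m_seq_Suc: "m_seq (Suc k) = xi_sum.mean * m_seq k + eta_sum.mean * m_prev k"
  using mseq_1[OF mean_discriminant_pos] mseq_Suc_Suc[OF mean_discriminant_pos]
  by (cases k) (simp_all add: m_seq_def m_prev_def mseq_def)

lemma tail_coef_Suc:
  "tail_coef (Suc n) a b = tail_coef n (a * xi_sum.mean + b) (a * eta_sum.mean) + a powr \<gamma>"
proof -
  have "(a * m_seq (Suc n - i) + b * m_prev (Suc n - i)) powr \<gamma>
      = ((a * xi_sum.mean + b) * m_seq (n - i) + (a * eta_sum.mean) * m_prev (n - i)) powr \<gamma>"
    if "i \<in> {1..n}" for i
  proof -
    from that have "Suc n - i = Suc (n - i)" by auto
    then show ?thesis by (simp add: m_seq_Suc m_prev_def algebra_simps)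
  qed
  then show ?thesis
    unfolding tail_coef_def by (simp add: sum.cl_ivl_Suc m_seq_0 m_prev_def)
qed

lemma tail_coef_Suc_0: "tail_coef (Suc n) 0 b = tail_coef n b 0"
  using tail_coef_Suc[of n 0 b] by (simp add: gamma_nonneg)

lemma lin_comb_borel [measurable]: "lin_comb n a b \<in> borel_measurable M"
  unfolding lin_comb_def by measurable

lemma powr_lin_comb_le:
  fixes u v a b :: real
  assumes "u \<ge> 0" "v \<ge> 0" "a \<ge> 0" "b \<ge> 0" "r > 0"
  shows "(a * u + b * v) powr r \<le> (2 * max a b) powr r * (u powr r + v powr r)"
proof -
  have "a * u + b * v \<le> 2 * max a b * max u v"
  proof -
    have "a * u \<le> max a b * max u v" "b * v \<le> max a b * max u v"
      using assms by (intro mult_mono; simp)+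
    then show ?thesis by simp
  qed
  then have "(a * u + b * v) powr r \<le> (2 * max a b * max u v) powr r"
    using assms by (intro powr_mono2) auto
  also have "\<dots> = (2 * max a b) powr r * (max u v) powr r"
    using assms by (subst powr_mult) (auto simp: le_max_iff_disj)
  also have "(max u v) powr r \<le> u powr r + v powr r" by (cases "u \<le> v") (auto simp: max_def)
  finally show ?thesis by (simp add: mult_left_mono)
qed

lemma tail_ratio_lin_comb_0:
  assumes ab: "a \<ge> 0" "b \<ge> 0"
  shows "tail_ratio (lin_comb 0 a b) (tail_coef 0 a b)"
proof -
  have r: "r > 0" "r > \<gamma>" using moment_exponent by auto
  have "integrable M (\<lambda>\<omega>. lin_comb 0 a b \<omega> powr r)"
  proof (rule Bochner_Integration.integrable_bound)
    show "integrable M (\<lambda>\<omega>. (2 * max a b) powr r * (real (X 0 \<omega>) powr r + real (X (-1) \<omega>) powr r))"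
      using X0_moment Xm1_moment by auto
    show "(\<lambda>\<omega>. lin_comb 0 a b \<omega> powr r) \<in> borel_measurable M" by measurable
    show "AE \<omega> in M. norm (lin_comb 0 a b \<omega> powr r)
        \<le> norm ((2 * max a b) powr r * (real (X 0 \<omega>) powr r + real (X (-1) \<omega>) powr r))"
    proof (rule AE_I2)
      fix \<omega>
      have "lin_comb 0 a b \<omega> powr r \<le> (2 * max a b) powr r * (real (X 0 \<omega>) powr r + real (X (-1) \<omega>) powr r)"
        unfolding lin_comb_def using powr_lin_comb_le[of "real (X 0 \<omega>)" "real (X (-1) \<omega>)" a b] ab r by simp
      then show "norm (lin_comb 0 a b \<omega> powr r)
          \<le> norm ((2 * max a b) powr r * (real (X 0 \<omega>) powr r + real (X (-1) \<omega>) powr r))"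
        by simp
    qed
  qed
  moreover have "lin_comb 0 a b \<omega> \<ge> 0" for \<omega> using ab by (simp add: lin_comb_def)
  ultimately have "tail_ratio (lin_comb 0 a b) 0"
    using tail_ratio_0_of_moment[OF lin_comb_borel _ _ r(2)] by blast
  then show ?thesis by (simp add: tail_coef_def)
qed

lemma offspring_sum_deviation:
  fixes \<iota> :: "nat \<Rightarrow> gwi_idx" and S :: "gwi_idx set" and Y N :: "'a \<Rightarrow> nat" and h :: "nat \<times> nat \<Rightarrow> nat"
  assumes R: "random_sum_tail M Fb \<gamma> Y r"
    and inj: "inj \<iota>" and \<iota>S: "\<And>i. i \<ge> 1 \<Longrightarrow> \<iota> i \<in> S"
    and S: "S \<subseteq> gwi_index_set" "gwi_past n \<inter> S = {}"
    and distF: "\<And>i. i \<ge> 1 \<Longrightarrow> distr M (count_space UNIV) (family (\<iota> i)) = distr M (count_space UNIV) Y"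
    and h: "(\<lambda>f. h (gwi_state n f)) \<in> measurable (PiM (gwi_past n) (\<lambda>_. count_space UNIV)) (count_space UNIV)"
    and N: "N \<in> measurable M (count_space UNIV)" "\<And>\<omega>. \<omega> \<in> space M \<Longrightarrow> N \<omega> = h (gwi_state n (\<lambda>i. family i \<omega>))"
    and TN: "tail_ratio (\<lambda>\<omega>. real (N \<omega>)) c" and \<delta>: "\<delta> > 0"
  shows "((\<lambda>x. prob {\<omega>\<in>space M. \<bar>(\<Sum>i=1..N \<omega>. real (family (\<iota> i) \<omega>)) - real (N \<omega>) * nat_rv_moment.mean M Y\<bar>
      > \<delta> * (nat_rv_moment.mean M Y * real (N \<omega>) + x)} / Fb x) \<longlongrightarrow> 0) at_top"
proof -
  interpret R: random_sum_tail M Fb \<gamma> Y r by (rule R)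
  have ind: "indep_vars (\<lambda>_. count_space UNIV) family (\<iota> ` {1..k})" for k
    using \<iota>S S by (intro indep_vars_subset[OF family_indep]) auto
  have "prob ({\<omega>\<in>space M. N \<omega> = k} \<inter> {\<omega>\<in>space M. (\<Sum>i=1..k. real (family (\<iota> i) \<omega>)) \<in> B})
      = prob {\<omega>\<in>space M. N \<omega> = k} * prob {\<omega>\<in>space M. (\<Sum>i=1..k. real (family (\<iota> i) \<omega>)) \<in> B}"
    if B: "B \<in> sets borel" for k B
  proof -
    define past where "past \<omega> = restrict (\<lambda>i. family i \<omega>) (gwi_past n)" for \<omega>
    define new where "new \<omega> = restrict (\<lambda>i. family i \<omega>) S" for \<omega>
    have "(\<lambda>f. (\<Sum>i=1..k. real (f (\<iota> i)))) \<in> borel_measurable (PiM S (\<lambda>_. count_space UNIV))"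
      using \<iota>S by (intro borel_measurable_sum measurable_compose[OF measurable_component_singleton]) auto
    from indep_var_restrict_compose[OF family_indep S(2) gwi_past_subset S(1) measurable_compose[OF h] this]
    have "indep_var borel (\<lambda>\<omega>. real (h (gwi_state n (past \<omega>)))) borel (\<lambda>\<omega>. \<Sum>i=1..k. real (new \<omega> (\<iota> i)))"
      unfolding past_def new_def by simp
    from indep_var_prob_Int[OF this _ B, of "{real k}"]
    have "prob ({\<omega>\<in>space M. h (gwi_state n (past \<omega>)) = k} \<inter> {\<omega>\<in>space M. (\<Sum>i=1..k. real (new \<omega> (\<iota> i))) \<in> B})
        = prob {\<omega>\<in>space M. h (gwi_state n (past \<omega>)) = k} * prob {\<omega>\<in>space M. (\<Sum>i=1..k. real (new \<omega> (\<iota> i))) \<in> B}"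
      by simp
    moreover have "{\<omega>\<in>space M. h (gwi_state n (past \<omega>)) = k} = {\<omega>\<in>space M. N \<omega> = k}"
      unfolding past_def using N(2) gwi_state_restrict[of n "gwi_past n"] by auto
    moreover have "(\<Sum>i=1..k. real (new \<omega> (\<iota> i))) = (\<Sum>i=1..k. real (family (\<iota> i) \<omega>))" for \<omega>
      unfolding new_def using \<iota>S by (intro sum.cong) auto
    ultimately show ?thesis by simp
  qed
  from R.random_sum_relative_deviation[OF inj ind distF N(1) TN this \<delta>] show ?thesis .
qed

definition xi_offspring :: "nat \<Rightarrow> 'a \<Rightarrow> real" where
  "xi_offspring n \<omega> = (\<Sum>i=1..X (int n) \<omega>. real (xi (Suc n) i \<omega>))"

definition eta_offspring :: "nat \<Rightarrow> 'a \<Rightarrow> real" where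
  "eta_offspring n \<omega> = (\<Sum>j=1..X (int n - 1) \<omega>. real (eta (Suc n) j \<omega>))"

lemma offspring_borel [measurable]:
  "xi_offspring n \<in> borel_measurable M" "eta_offspring n \<in> borel_measurable M"
  unfolding xi_offspring_def eta_offspring_def
  using xi_sum.random_sum_borel[of "xi (Suc n)", OF xi_measurable X_measurable(1)]
    eta_sum.random_sum_borel[of "eta (Suc n)", OF eta_measurable X_measurable(2)] by auto

lemma xi_offspring_deviation:
  assumes "tail_ratio (\<lambda>\<omega>. real (X (int n) \<omega>)) c" "\<delta> > 0"
  shows "((\<lambda>x. prob {\<omega>\<in>space M. \<bar>xi_offspring n \<omega> - real (X (int n) \<omega>) * xi_sum.mean\<bar>
      > \<delta> * (xi_sum.mean * real (X (int n) \<omega>) + x)} / Fb x) \<longlongrightarrow> 0) at_top"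
proof -
  have "((\<lambda>x. prob {\<omega>\<in>space M. \<bar>(\<Sum>i=1..X (int n) \<omega>. real (family (IXi (Suc n) i) \<omega>))
      - real (X (int n) \<omega>) * xi_sum.mean\<bar> > \<delta> * (xi_sum.mean * real (X (int n) \<omega>) + x)} / Fb x) \<longlongrightarrow> 0) at_top"
  proof (rule offspring_sum_deviation[OF xi_random_sum_tail, where S="{IXi (Suc n) i | i. 1 \<le> i}" and h=fst])
    show "inj (IXi (Suc n))" by (auto simp: inj_on_def)
    show "{IXi (Suc n) i | i. 1 \<le> i} \<subseteq> gwi_index_set" by (auto simp: gwi_index_set_def)
    show "gwi_past n \<inter> {IXi (Suc n) i | i. 1 \<le> i} = {}" by (auto simp: gwi_past_def)
    show "(\<lambda>f. fst (gwi_state n f)) \<in> measurable (PiM (gwi_past n) (\<lambda>_. count_space UNIV)) (count_space UNIV)"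
      using gwi_state_measurable[of n "gwi_past n"] by simp
    show "distr M (count_space UNIV) (family (IXi (Suc n) i)) = distr M (count_space UNIV) (xi 1 1)" if "i \<ge> 1" for i
      using xi_distr[of "Suc n" i] that by simp
  qed (use assms X_measurable gwi_state_family in auto)
  then show ?thesis unfolding xi_offspring_def by simp
qed

lemma eta_offspring_deviation:
  assumes "tail_ratio (\<lambda>\<omega>. real (X (int n - 1) \<omega>)) c" "\<delta> > 0"
  shows "((\<lambda>x. prob {\<omega>\<in>space M. \<bar>eta_offspring n \<omega> - real (X (int n - 1) \<omega>) * eta_sum.mean\<bar>
      > \<delta> * (eta_sum.mean * real (X (int n - 1) \<omega>) + x)} / Fb x) \<longlongrightarrow> 0) at_top"
proof -
  have "((\<lambda>x. prob {\<omega>\<in>space M. \<bar>(\<Sum>i=1..X (int n - 1) \<omega>. real (family (IEta (Suc n) i) \<omega>))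
      - real (X (int n - 1) \<omega>) * eta_sum.mean\<bar> > \<delta> * (eta_sum.mean * real (X (int n - 1) \<omega>) + x)} / Fb x) \<longlongrightarrow> 0) at_top"
  proof (rule offspring_sum_deviation[OF eta_random_sum_tail, where S="{IEta (Suc n) i | i. 1 \<le> i}" and h=snd])
    show "inj (IEta (Suc n))" by (auto simp: inj_on_def)
    show "{IEta (Suc n) i | i. 1 \<le> i} \<subseteq> gwi_index_set" by (auto simp: gwi_index_set_def)
    show "gwi_past n \<inter> {IEta (Suc n) i | i. 1 \<le> i} = {}" by (auto simp: gwi_past_def)
    show "(\<lambda>f. snd (gwi_state n f)) \<in> measurable (PiM (gwi_past n) (\<lambda>_. count_space UNIV)) (count_space UNIV)"
      using gwi_state_measurable[of n "gwi_past n"] by simp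
    show "distr M (count_space UNIV) (family (IEta (Suc n) i)) = distr M (count_space UNIV) (eta 1 1)" if "i \<ge> 1" for i
      using eta_distr[of "Suc n" i] that by simp
  qed (use assms X_measurable gwi_state_family in auto)
  then show ?thesis unfolding eta_offspring_def by simp
qed

lemma lin_comb_1_0: "lin_comb n 1 0 = (\<lambda>\<omega>. real (X (int n) \<omega>))"
  by (simp add: lin_comb_def fun_eq_iff)

lemma lin_comb_0_1: "lin_comb n 0 1 = (\<lambda>\<omega>. real (X (int n - 1) \<omega>))"
  by (simp add: lin_comb_def fun_eq_iff)

lemma offspring_tail_ratio:
  assumes a: "a > 0" and b: "b \<ge> 0"
    and IH: "\<And>a b. a \<ge> 0 \<Longrightarrow> b \<ge> 0 \<Longrightarrow> tail_ratio (lin_comb n a b) (tail_coef n a b)"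
  shows "tail_ratio (\<lambda>\<omega>. a * (xi_offspring n \<omega> + eta_offspring n \<omega>) + b * real (X (int n) \<omega>))
    (tail_coef n (a * xi_sum.mean + b) (a * eta_sum.mean))"
proof (rule tail_ratio_perturb[OF lin_comb_borel _ IH])
  show "(\<lambda>\<omega>. a * (xi_offspring n \<omega> + eta_offspring n \<omega>) + b * real (X (int n) \<omega>)) \<in> borel_measurable M"
    by measurable
  show "a * xi_sum.mean + b \<ge> 0" "a * eta_sum.mean \<ge> 0"
    using a b xi_sum.mean_nonneg eta_sum.mean_nonneg by auto
  fix \<delta> :: real assume \<delta>: "\<delta> > 0"
  define d where "d = min \<delta> (\<delta> / (2*a))"
  have d: "0 < d" "d \<le> \<delta>" "2 * a * d \<le> \<delta>" using \<delta> a by (auto simp: d_def min_def field_simps)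
  define E1 where "E1 x = {\<omega>\<in>space M. \<bar>xi_offspring n \<omega> - real (X (int n) \<omega>) * xi_sum.mean\<bar>
      > d * (xi_sum.mean * real (X (int n) \<omega>) + x)}" for x
  define E2 where "E2 x = {\<omega>\<in>space M. \<bar>eta_offspring n \<omega> - real (X (int n - 1) \<omega>) * eta_sum.mean\<bar>
      > d * (eta_sum.mean * real (X (int n - 1) \<omega>) + x)}" for x
  have E: "E1 x \<in> events" "E2 x \<in> events" for x unfolding E1_def E2_def by measurable
  have "((\<lambda>x. prob (E1 x) / Fb x + prob (E2 x) / Fb x) \<longlongrightarrow> 0 + 0) at_top"
    unfolding E1_def E2_def using IH[of 1 0] IH[of 0 1] d(1)
    by (intro tendsto_add xi_offspring_deviation eta_offspring_deviation) (auto simp: lin_comb_1_0 lin_comb_0_1)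
  then have lim: "((\<lambda>x. prob (E1 x) / Fb x + prob (E2 x) / Fb x) \<longlongrightarrow> 0) at_top" by simp
  show "((\<lambda>x. prob {\<omega>\<in>space M. \<bar>a * (xi_offspring n \<omega> + eta_offspring n \<omega>) + b * real (X (int n) \<omega>)
      - lin_comb n (a * xi_sum.mean + b) (a * eta_sum.mean) \<omega>\<bar>
      > \<delta> * (lin_comb n (a * xi_sum.mean + b) (a * eta_sum.mean) \<omega> + x)} / Fb x) \<longlongrightarrow> 0) at_top"
  proof (rule tendsto_sandwich[OF _ _ tendsto_const lim])
    show "eventually (\<lambda>x. prob {\<omega>\<in>space M. \<bar>a * (xi_offspring n \<omega> + eta_offspring n \<omega>) + b * real (X (int n) \<omega>)
        - lin_comb n (a * xi_sum.mean + b) (a * eta_sum.mean) \<omega>\<bar>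
        > \<delta> * (lin_comb n (a * xi_sum.mean + b) (a * eta_sum.mean) \<omega> + x)} / Fb x
        \<le> prob (E1 x) / Fb x + prob (E2 x) / Fb x) at_top"
      using eventually_ge_at_top[of 0]
    proof eventually_elim
      case (elim x)
      have "\<omega> \<in> E1 x \<union> E2 x" if \<omega>: "\<omega> \<in> space M" and gt: "\<bar>a * (xi_offspring n \<omega> + eta_offspring n \<omega>)
          + b * real (X (int n) \<omega>) - lin_comb n (a * xi_sum.mean + b) (a * eta_sum.mean) \<omega>\<bar>
          > \<delta> * (lin_comb n (a * xi_sum.mean + b) (a * eta_sum.mean) \<omega> + x)" for \<omega>
      proof (rule ccontr)
        assume "\<omega> \<notin> E1 x \<union> E2 x"
        then have "\<bar>xi_offspring n \<omega> - real (X (int n) \<omega>) * xi_sum.mean\<bar> \<le> d * (xi_sum.mean * real (X (int n) \<omega>) + x)"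
          "\<bar>eta_offspring n \<omega> - real (X (int n - 1) \<omega>) * eta_sum.mean\<bar> \<le> d * (eta_sum.mean * real (X (int n - 1) \<omega>) + x)"
          using \<omega> unfolding E1_def E2_def by auto
        from offspring_error_le[OF a b _ _ xi_sum.mean_nonneg eta_sum.mean_nonneg elim d this]
        show False using gt unfolding lin_comb_def by simp
      qed
      then have "prob {\<omega>\<in>space M. \<bar>a * (xi_offspring n \<omega> + eta_offspring n \<omega>) + b * real (X (int n) \<omega>)
          - lin_comb n (a * xi_sum.mean + b) (a * eta_sum.mean) \<omega>\<bar>
          > \<delta> * (lin_comb n (a * xi_sum.mean + b) (a * eta_sum.mean) \<omega> + x)} \<le> prob (E1 x) + prob (E2 x)"
        using E by (intro prob_le_cover) auto
      from divide_Fb_mono[OF this] show ?case by (simp add: add_divide_distrib)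
    qed
  qed (use Fb_pos in \<open>auto intro!: always_eventually divide_nonneg_pos\<close>)
qed

lemma offspring_indep_immigrant:
  "indep_var borel (\<lambda>\<omega>. a * (xi_offspring n \<omega> + eta_offspring n \<omega>) + b * real (X (int n) \<omega>))
    borel (\<lambda>\<omega>. c * real (eps (Suc n) \<omega>))"
proof -
  define Q where "Q = gwi_past (Suc n) - {IEps (Suc n)}"
  define W where "W f = a * (real (\<Sum>i=1..fst (gwi_state n f). f (IXi (Suc n) i))
      + real (\<Sum>j=1..snd (gwi_state n f). f (IEta (Suc n) j))) + b * real (fst (gwi_state n f))"
    for f :: "gwi_idx \<Rightarrow> nat"
  have past: "gwi_past n \<subseteq> Q" unfolding Q_def gwi_past_def by auto
  have component: "(\<lambda>f. f i) \<in> measurable (PiM Q (\<lambda>_. count_space UNIV)) (count_space UNIV)" if "i \<in> Q" for i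
    using that by (intro measurable_component_singleton)
  have "(\<lambda>f. \<Sum>i=1..fst (gwi_state n f). f (IXi (Suc n) i)) \<in> measurable (PiM Q (\<lambda>_. count_space UNIV)) (count_space UNIV)"
      "(\<lambda>f. \<Sum>j=1..snd (gwi_state n f). f (IEta (Suc n) j)) \<in> measurable (PiM Q (\<lambda>_. count_space UNIV)) (count_space UNIV)"
      "(\<lambda>f. fst (gwi_state n f)) \<in> measurable (PiM Q (\<lambda>_. count_space UNIV)) (count_space UNIV)"
    using gwi_state_measurable[OF past]
    by (auto intro!: measurable_nat_random_sum component simp: Q_def gwi_past_def)
  note nat_measurable = this
  have "(\<lambda>f. real (\<Sum>i=1..fst (gwi_state n f). f (IXi (Suc n) i))) \<in> borel_measurable (PiM Q (\<lambda>_. count_space UNIV))"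
      "(\<lambda>f. real (\<Sum>j=1..snd (gwi_state n f). f (IEta (Suc n) j))) \<in> borel_measurable (PiM Q (\<lambda>_. count_space UNIV))"
      "(\<lambda>f. real (fst (gwi_state n f))) \<in> borel_measurable (PiM Q (\<lambda>_. count_space UNIV))"
    by (rule measurable_compose[OF nat_measurable(1)], simp, rule measurable_compose[OF nat_measurable(2)], simp,
        rule measurable_compose[OF nat_measurable(3)], simp)
  then have "W \<in> borel_measurable (PiM Q (\<lambda>_. count_space UNIV))"
    unfolding W_def by measurable
  moreover have "(\<lambda>f. real (f (IEps (Suc n)))) \<in> borel_measurable (PiM {IEps (Suc n)} (\<lambda>_. count_space UNIV))"
    by (rule measurable_compose[OF measurable_component_singleton]) auto
  then have "(\<lambda>f. c * real (f (IEps (Suc n)))) \<in> borel_measurable (PiM {IEps (Suc n)} (\<lambda>_. count_space UNIV))"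
    by measurable
  moreover have "Q \<inter> {IEps (Suc n)} = {}" "Q \<subseteq> gwi_index_set" "{IEps (Suc n)} \<subseteq> gwi_index_set"
    unfolding Q_def using gwi_past_subset by (auto simp: gwi_index_set_def)
  ultimately have indep: "indep_var borel (\<lambda>\<omega>. W (restrict (\<lambda>i. family i \<omega>) Q))
      borel (\<lambda>\<omega>. c * real (restrict (\<lambda>i. family i \<omega>) {IEps (Suc n)} (IEps (Suc n))))"
    by (intro indep_var_restrict_compose[OF family_indep])
  have W_eq: "W (restrict (\<lambda>i. family i \<omega>) Q) = a * (xi_offspring n \<omega> + eta_offspring n \<omega>) + b * real (X (int n) \<omega>)"
    if "\<omega> \<in> space M" for \<omega>
  proof -
    have "gwi_state n (restrict (\<lambda>i. family i \<omega>) Q) = (X (int n) \<omega>, X (int n - 1) \<omega>)"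
      using gwi_state_restrict[OF past] gwi_state_family[OF that] by simp
    moreover have "(\<Sum>i=1..k. restrict (\<lambda>i. family i \<omega>) Q (IXi (Suc n) i)) = (\<Sum>i=1..k. xi (Suc n) i \<omega>)"
        "(\<Sum>i=1..k. restrict (\<lambda>i. family i \<omega>) Q (IEta (Suc n) i)) = (\<Sum>i=1..k. eta (Suc n) i \<omega>)" for k
      by (auto intro!: sum.cong simp: Q_def gwi_past_def)
    ultimately show ?thesis
      unfolding W_def xi_offspring_def eta_offspring_def by (simp add: of_nat_sum)
  qed
  have "indep_var borel (\<lambda>\<omega>. W (restrict (\<lambda>i. family i \<omega>) Q))
      borel (\<lambda>\<omega>. c * real (restrict (\<lambda>i. family i \<omega>) {IEps (Suc n)} (IEps (Suc n))))
    \<longleftrightarrow> indep_var borel (\<lambda>\<omega>. a * (xi_offspring n \<omega> + eta_offspring n \<omega>) + b * real (X (int n) \<omega>))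
      borel (\<lambda>\<omega>. c * real (eps (Suc n) \<omega>))"
    by (rule indep_var_cong) (simp_all add: W_eq)
  with indep show ?thesis by simp
qed

lemma tail_ratio_lin_comb_Suc:
  assumes IH: "\<And>a b. a \<ge> 0 \<Longrightarrow> b \<ge> 0 \<Longrightarrow> tail_ratio (lin_comb n a b) (tail_coef n a b)"
    and ab: "a \<ge> 0" "b \<ge> 0"
  shows "tail_ratio (lin_comb (Suc n) a b) (tail_coef (Suc n) a b)"
proof (cases "a = 0")
  case True
  have "lin_comb (Suc n) 0 b = lin_comb n b 0" by (simp add: lin_comb_def fun_eq_iff)
  with IH[of b 0] ab show ?thesis by (simp add: True tail_coef_Suc_0)
next
  case False
  with ab have a: "a > 0" by simp
  have "prob {\<omega>\<in>space M. real (eps (Suc n) \<omega>) > x} = Fb x" for x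
    unfolding Fb_def using distr_eq_prob[OF eps_distr eps_measurable eps_measurable, of "Suc n" "\<lambda>k. real k > x"]
    by simp
  then have "tail_ratio (\<lambda>\<omega>. real (eps (Suc n) \<omega>)) 1" by (simp add: tail_ratio_def)
  from tail_ratio_cmult[OF this a] have eps_tail: "tail_ratio (\<lambda>\<omega>. a * real (eps (Suc n) \<omega>)) (a powr \<gamma>)"
    by simp
  have sum_tail: "tail_ratio (\<lambda>\<omega>. a * (xi_offspring n \<omega> + eta_offspring n \<omega>) + b * real (X (int n) \<omega>) + a * real (eps (Suc n) \<omega>))
      (tail_coef n (a * xi_sum.mean + b) (a * eta_sum.mean) + a powr \<gamma>)"
  proof (rule tail_ratio_add_indep[OF _ _ offspring_tail_ratio[OF a ab(2) IH] _ _ eps_tail offspring_indep_immigrant])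
    show "a * (xi_offspring n \<omega> + eta_offspring n \<omega>) + b * real (X (int n) \<omega>) \<ge> 0" for \<omega>
      using a ab by (simp add: xi_offspring_def eta_offspring_def sum_nonneg)
    show "a * real (eps (Suc n) \<omega>) \<ge> 0" for \<omega> using a by simp
  qed measurable
  have "lin_comb (Suc n) a b \<omega> = a * (xi_offspring n \<omega> + eta_offspring n \<omega>) + b * real (X (int n) \<omega>)
      + a * real (eps (Suc n) \<omega>)" if "\<omega> \<in> space M" for \<omega>
  proof -
    have "real (X (int (Suc n)) \<omega>) = xi_offspring n \<omega> + eta_offspring n \<omega> + real (eps (Suc n) \<omega>)"
      using X_Suc[OF that, of n] unfolding xi_offspring_def eta_offspring_def by (simp add: of_nat_sum)
    then show ?thesis unfolding lin_comb_def by (simp add: distrib_left)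
  qed
  then show ?thesis
    unfolding tail_coef_Suc using sum_tail by (subst tail_ratio_cong) auto
qed

lemma tail_ratio_lin_comb: "a \<ge> 0 \<Longrightarrow> b \<ge> 0 \<Longrightarrow> tail_ratio (lin_comb n a b) (tail_coef n a b)"
proof (induction n arbitrary: a b)
  case 0
  then show ?case by (rule tail_ratio_lin_comb_0)
next
  case (Suc n)
  then show ?case by (intro tail_ratio_lin_comb_Suc) auto
qed

lemma tail_ratio_X:
  "tail_ratio (\<lambda>\<omega>. real (X (int n) \<omega>)) (\<Sum>i=1..n. m_seq (n - i) powr \<gamma>)"
  using tail_ratio_lin_comb[of 1 0 n] by (simp add: lin_comb_1_0 tail_coef_def m_seq_def)

lemma m_seq_powr_sum_pos: "n \<ge> 1 \<Longrightarrow> (\<Sum>i=1..n. m_seq (n - i) powr \<gamma>) > 0"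
  using member_le_sum[of n "{1..n}" "\<lambda>i. m_seq (n - i) powr \<gamma>"] by (simp add: m_seq_0)

end

theorem theorem3p7:
  fixes M :: "'a measure"
    and X :: "int \<Rightarrow> 'a \<Rightarrow> nat"
    and xi eta :: "nat \<Rightarrow> nat \<Rightarrow> 'a \<Rightarrow> nat"
    and eps :: "nat \<Rightarrow> 'a \<Rightarrow> nat"
    and \<gamma> r :: real
  assumes "prob_space M"
    and "prob_space.second_order_GWI M X xi eta eps"
    and "\<gamma> \<ge> 0"
    and "prob_space.regularly_varying M (\<lambda>\<omega>. real (eps 1 \<omega>)) \<gamma>"
    and "r > max 1 \<gamma>"
    and "integrable M (\<lambda>\<omega>. real (xi 1 1 \<omega>) powr r)"
    and "integrable M (\<lambda>\<omega>. real (eta 1 1 \<omega>) powr r)"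
    and "integrable M (\<lambda>\<omega>. real (X 0 \<omega>) powr r)"
    and "integrable M (\<lambda>\<omega>. real (X (-1) \<omega>) powr r)"
    and "measure M {\<omega>\<in>space M. xi 1 1 \<omega> = 0} < 1 \<or> measure M {\<omega>\<in>space M. eta 1 1 \<omega> = 0} < 1"
    and "n \<ge> 1"
  shows "(\<lambda>x::real. measure M {\<omega>\<in>space M. real (X (int n) \<omega>) > x}) \<sim>[at_top]
           (\<lambda>x. (\<Sum>i=1..n. mseq (integral\<^sup>L M (\<lambda>\<omega>. real (xi 1 1 \<omega>)))
                                  (integral\<^sup>L M (\<lambda>\<omega>. real (eta 1 1 \<omega>))) (n - i) powr \<gamma>)
                * measure M {\<omega>\<in>space M. real (eps 1 \<omega>) > x})
       \<and> prob_space.regularly_varying M (\<lambda>\<omega>. real (X (int n) \<omega>)) \<gamma>"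
proof -
  interpret gwi_regvar M X xi eta eps \<gamma> r
    using assms(1-10) by (intro gwi_regvar.intro gwi.intro gwi_axioms.intro gwi_regvar_axioms.intro)
  note tail = tail_ratio_X[of n] and pos = m_seq_powr_sum_pos[OF assms(11)]
  show ?thesis
    using tail_ratio_imp_asymp_equiv[OF tail pos] tail_ratio_imp_regularly_varying[OF tail pos]
    unfolding m_seq_def xi_sum.mean_def eta_sum.mean_def Fb_def by simp
qed

end
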